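(* Let $X$ and $Y$ be Banach spaces, $S\in\mathcal{L}(X,Y)$, $F\subset X$ convex and $n\in\mathbb{N}$. Then \[ c_{n-1}(S,F)\le\Big(\prod_{k=0}^{n-1}c_k(S,F)\Big)^{1/n}\le n^{3/2}\Big(\prod_{k=0}^{n-1}h_k(S,F)\Big)^{1/n}. \] Moreover: (a) if $F$ is symmetric, the exponent $3/2$ can be replaced by $1$; (b) if $Y$ is a Hilbert space, the exponent $3/2$ can be replaced by $1$; (c) if $F$ is symmetric and $Y$ is a Hilbert space, $3/2$ can be replaced by $1/2$; (d) if $X$ is a Hilbert space and $F=B_X$, then $c_{2n-2}(S,F)\le\big(\prod_{k=0}^{n-1}c_{2k}(S,F)\big)^{1/n}\le n^{1/2}\big(\prod_{k=0}^{n-1}h_k(S,F)\big)^{1/n}$.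
   Context: Gelfand numbers: $c_n(S,F)=\inf_{L_1,\dots,L_n\in X'}\sup\{\tfrac12\|S(f)-S(g)\|: f,g\in F,\ L_k(f)=L_k(g)\ \forall k\le n\}$. Hilbert numbers: $h_n(S,F)=\sup\{c_n(BSA,B_{\ell_2}): B\in\mathcal{L}(Y,\ell_2),\ \|B\|\le1,\ A\in\mathcal{L}(\ell_2,X),\ x\in F,\ A(B_{\ell_2})+x\subset F\}$. $B_X$ is the closed unit ball of $X$, $X'$ its dual. *)

theory Defs
  imports "HOL-Analysis.Analysis"
begin

definition l2 :: "(nat \<Rightarrow> real) set" where
  "l2 = {f. summable (\<lambda>i. (f i)\<^sup>2)}"

definition l2norm :: "(nat \<Rightarrow> real) \<Rightarrow> real" where
  "l2norm f = sqrt (\<Sum>i. (f i)\<^sup>2)"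

definition l2dist :: "(nat \<Rightarrow> real) \<Rightarrow> (nat \<Rightarrow> real) \<Rightarrow> real" where
  "l2dist f g = l2norm (\<lambda>i. f i - g i)"

definition l2ball :: "(nat \<Rightarrow> real) set" where
  "l2ball = {f \<in> l2. l2norm f \<le> 1}"

definition l2_linear :: "((nat \<Rightarrow> real) \<Rightarrow> 'a::real_vector) \<Rightarrow> bool" where
  "l2_linear T \<longleftrightarrow> (\<forall>f\<in>l2. \<forall>g\<in>l2. \<forall>a b.
      T (\<lambda>i. a * f i + b * g i) = a *\<^sub>R T f + b *\<^sub>R T g)"

definition l2_dual :: "((nat \<Rightarrow> real) \<Rightarrow> real) set" where
  "l2_dual = {L. l2_linear L \<and> (\<exists>C. \<forall>f\<in>l2. \<bar>L f\<bar> \<le> C * l2norm f)}"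

definition gelfand_gen ::
  "('a \<Rightarrow> real) set \<Rightarrow> ('b \<Rightarrow> 'b \<Rightarrow> real) \<Rightarrow> nat \<Rightarrow> ('a \<Rightarrow> 'b) \<Rightarrow> 'a set \<Rightarrow> ennreal" where
  "gelfand_gen Dual d n S F =
     (INF L \<in> {L :: nat \<Rightarrow> 'a \<Rightarrow> real. \<forall>k<n. L k \<in> Dual}.
        SUP p \<in> {(f, g). f \<in> F \<and> g \<in> F \<and> (\<forall>k<n. L k f = L k g)}.
          ennreal (d (S (fst p)) (S (snd p)) / 2))"

definition gelfand_number ::
  "('a::real_normed_vector \<Rightarrow> 'b::real_normed_vector) \<Rightarrow> 'a set \<Rightarrow> nat \<Rightarrow> ennreal" where
  "gelfand_number S F n = gelfand_gen {L :: 'a \<Rightarrow> real. bounded_linear L} dist n S F"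

definition hilbert_number ::
  "('a::real_normed_vector \<Rightarrow> 'b::real_normed_vector) \<Rightarrow> 'a set \<Rightarrow> nat \<Rightarrow> ennreal" where
  "hilbert_number S F n =
     (SUP t \<in> {(B, A, x).
           (\<forall>y z a b. B (a *\<^sub>R y + b *\<^sub>R z) = (\<lambda>i. a * B y i + b * B z i)) \<and>
           (\<forall>y. B y \<in> l2 \<and> l2norm (B y) \<le> norm y) \<and>
           l2_linear A \<and> (\<exists>C. \<forall>f\<in>l2. norm (A f) \<le> C * l2norm f) \<and>
           x \<in> F \<and> (\<forall>f\<in>l2ball. A f + x \<in> F)}.
        gelfand_gen l2_dual l2dist n
          ((fst t :: 'b \<Rightarrow> nat \<Rightarrow> real) \<circ> S \<circ> (fst (snd t) :: (nat \<Rightarrow> real) \<Rightarrow> 'a)) l2ball)"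

definition enn_root :: "nat \<Rightarrow> ennreal \<Rightarrow> ennreal" where
  "enn_root n x = (if x = top then top else ennreal (root n (enn2real x)))"

text \<open>A real normed space whose norm is induced by an inner product
  (together with completeness, i.e. class banach, this is a Hilbert space).\<close>
definition hilbert_space :: "'a::real_normed_vector itself \<Rightarrow> bool" where
  "hilbert_space _ \<longleftrightarrow> (\<exists>ip :: 'a \<Rightarrow> 'a \<Rightarrow> real.
      (\<forall>x y. ip x y = ip y x) \<and>
      (\<forall>x y z a b. ip (a *\<^sub>R x + b *\<^sub>R y) z = a * ip x z + b * ip y z) \<and>
      (\<forall>x. ip x x = (norm x)\<^sup>2))"

definition symmetric_set :: "'a::real_vector set \<Rightarrow> bool" where
  "symmetric_set F \<longleftrightarrow> (\<forall>f\<in>F. - f \<in> F)"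

end

theory Submission
  imports Defs "Jordan_Normal_Form.Determinant"
begin

text \<open>
  Fix \<open>t\<^sub>k < c\<^sub>k(S,F)\<close>. Choose pairs \<open>f\<^sub>k, g\<^sub>k \<in> F\<close> one after another such that
  \<open>u\<^sub>k = (f\<^sub>k - g\<^sub>k)/2\<close> satisfies \<open>\<parallel>S u\<^sub>k\<parallel> > t\<^sub>k\<close> and \<open>\<psi>\<^sub>j(S u\<^sub>k) = 0\<close> for \<open>j < k\<close>, where \<open>\<psi>\<^sub>j\<close>
  is a norming functional of \<open>S u\<^sub>j\<close>; this is possible because only \<open>k\<close> bounded functionals
  are prescribed. Then \<open>A a = \<alpha> \<Sum> a\<^sub>i u\<^sub>i + x\<close> maps the unit ball of \<open>\<ell>\<^sub>2\<close> into \<open>F\<close> and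
  \<open>B y = \<beta> (\<psi>\<^sub>j y)\<^sub>j\<^sub><\<^sub>n\<close> has norm at most one, where \<open>\<alpha> = 1/n\<close> for convex and \<open>\<alpha> = 1/\<surd>n\<close> for
  symmetric \<open>F\<close>, and \<open>\<beta> = 1/\<surd>n\<close> in general but \<open>\<beta> = 1\<close> when \<open>Y\<close> is a Hilbert space
  (the \<open>\<psi>\<^sub>j\<close> are then orthonormal). The operator \<open>BSA\<close> is a lower triangular
  \<open>n \<times> n\<close> matrix with diagonal entries at least \<open>\<alpha>\<beta>t\<^sub>k\<close>, and the product of the first \<open>n\<close>
  Gelfand numbers of a matrix on the unit ball of \<open>\<ell>\<^sub>2\<close> is at least its absolute
  determinant (via its singular vectors). Hence \<open>\<Prod> h\<^sub>k \<ge> (\<alpha>\<beta>)\<^sup>n \<Prod> t\<^sub>k\<close>. For a Hilbert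
  ball, \<open>n\<close> further functionals make the \<open>u\<^sub>k\<close> orthogonal, so that \<open>\<alpha> = 1\<close>.
\<close>

section \<open>Singular vectors of a square matrix\<close>

text \<open>Vectors of \<open>\<real>\<^sup>n\<close> are sequences vanishing from \<open>n\<close> on, so that they lie in \<open>l2\<close>, and
  \<open>n \<times> n\<close> matrices are functions \<open>nat \<Rightarrow> nat \<Rightarrow> real\<close>.\<close>

definition dot :: "nat \<Rightarrow> (nat\<Rightarrow>real) \<Rightarrow> (nat\<Rightarrow>real) \<Rightarrow> real" where
  "dot n x y = (\<Sum>i<n. x i * y i)"
definition mat_app :: "nat \<Rightarrow> (nat\<Rightarrow>nat\<Rightarrow>real) \<Rightarrow> (nat\<Rightarrow>real) \<Rightarrow> (nat\<Rightarrow>real)" where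
  "mat_app n M x = (\<lambda>i. \<Sum>k<n. M i k * x k)"
definition unit_perp :: "nat \<Rightarrow> (nat \<Rightarrow> nat \<Rightarrow> real) \<Rightarrow> nat \<Rightarrow> (nat\<Rightarrow>real) set" where
  "unit_perp n p j = {x. (\<forall>i\<ge>n. x i = 0) \<and> dot n x x = 1 \<and> (\<forall>l<j. dot n x (p l) = 0)}"

lemma continuous_on_dot: "continuous_on UNIV (\<lambda>x. dot n (f x) (g x))"
  if "continuous_on UNIV f" "continuous_on UNIV g" for f g :: "(nat\<Rightarrow>real) \<Rightarrow> nat \<Rightarrow> real"
proof -
  have "\<And>i. continuous_on UNIV (\<lambda>x. f x i)" "\<And>i. continuous_on UNIV (\<lambda>x. g x i)"
    using that by (auto intro: continuous_on_product_then_coordinatewise)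
  then show ?thesis unfolding dot_def by (intro continuous_intros) auto
qed

lemma continuous_on_mat_app: "continuous_on UNIV (mat_app n M)"
proof -
  have "\<And>i. continuous_on UNIV (\<lambda>x. mat_app n M x i)"
    unfolding mat_app_def by (intro continuous_intros continuous_on_product_coordinates)
  then show ?thesis by (rule continuous_on_coordinatewise_then_product)
qed

lemma compact_unit_perp: "compact (unit_perp n p j)"
proof -
  define S where "S = (\<lambda>i::nat. if i < n then {-1..1::real} else {0})"
  have c1: "compact (Pi\<^sub>E UNIV S)"
  proof -
    have "compactin (product_topology (\<lambda>i. euclideanreal) UNIV) (Pi\<^sub>E UNIV S)"
      unfolding compactin_PiE S_def by auto
    then show ?thesis by (simp add: euclidean_product_topology compactin_euclidean_iff)
  qed
  have cl: "closed (unit_perp n p j)"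
  proof -
    have "unit_perp n p j = (\<Inter>i\<in>{n..}. {x. x i = 0}) \<inter> {x. dot n x x = 1} \<inter> (\<Inter>l\<in>{..<j}. {x. dot n x (p l) = 0})"
      unfolding unit_perp_def by auto
    moreover have "closed {x::nat\<Rightarrow>real. x i = 0}" for i
      by (rule closed_Collect_eq) (auto intro: continuous_on_product_coordinates)
    moreover have "closed {x. dot n x x = 1}"
      by (rule closed_Collect_eq) (auto intro!: continuous_on_dot)
    moreover have "closed {x. dot n x (p l) = 0}" for l
      by (rule closed_Collect_eq) (auto intro!: continuous_on_dot)
    ultimately show ?thesis by (auto intro!: closed_Int closed_INT)
  qed
  have sub: "unit_perp n p j \<subseteq> Pi\<^sub>E UNIV S"
  proof
    fix x assume x: "x \<in> unit_perp n p j"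
    have "x i \<in> S i" for i
    proof (cases "i < n")
      case True
      have "(x i)^2 \<le> (\<Sum>k<n. x k * x k)"
        using True member_le_sum[of i "{..<n}" "\<lambda>k. x k * x k"] by (simp add: power2_eq_square)
      then have "(x i)^2 \<le> 1" using x by (simp add: unit_perp_def dot_def)
      then have "\<bar>x i\<bar> \<le> 1" by (simp add: abs_square_le_1)
      then show ?thesis using True by (auto simp: S_def)
    next
      case False then show ?thesis using x by (auto simp: S_def unit_perp_def)
    qed
    then show "x \<in> Pi\<^sub>E UNIV S" by auto
  qed
  show ?thesis using compact_Int_closed[OF c1 cl] sub by (simp add: Int_absorb1)
qed

lemma dot_self_pos: "(\<exists>i<n. x i \<noteq> 0) \<Longrightarrow> dot n x x > 0"
proof -
  assume "\<exists>i<n. x i \<noteq> 0"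
  then obtain i where i: "i < n" "x i \<noteq> 0" by auto
  have "0 < x i * x i" using i by (metis not_real_square_gt_zero)
  also have "\<dots> \<le> (\<Sum>k<n. x k * x k)" using i member_le_sum[of i "{..<n}" "\<lambda>k. x k * x k"] by simp
  finally show ?thesis by (simp add: dot_def)
qed

lemma dot_self_nonneg: "dot n x x \<ge> 0"
  unfolding dot_def by (intro sum_nonneg) auto

lemma dot_scale: "dot n (\<lambda>i. c * x i) y = c * dot n x y" "dot n x (\<lambda>i. c * y i) = c * dot n x y"
  unfolding dot_def by (auto simp: sum_distrib_left intro!: sum.cong)

lemma dot_commute: "dot n x y = dot n y x"
  unfolding dot_def by (simp add: mult.commute)

lemma normalize_finite_support:
  assumes "\<forall>i\<ge>n. x i = 0" "\<exists>i<n. x i \<noteq> 0"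
  defines "y \<equiv> (\<lambda>i. (1 / sqrt (dot n x x)) * x i)"
  shows "(\<forall>i\<ge>n. y i = 0)" "dot n y y = 1" "\<And>z. dot n x z = 0 \<Longrightarrow> dot n y z = 0"
proof -
  have p: "dot n x x > 0" using assms dot_self_pos by blast
  show "\<forall>i\<ge>n. y i = 0" using assms by (simp add: y_def)
  show "dot n y y = 1" using p unfolding y_def dot_scale
    by (simp add: field_simps)
  show "dot n y z = 0" if "dot n x z = 0" for z using that unfolding y_def dot_scale by simp
qed

text \<open>If \<open>j < n\<close>, some unit vector \<open>e\<^sub>m\<close> is not in the span of the orthonormal \<open>p\<^sub>l\<close> (compare
  traces), and its normalised residual lies in \<open>unit_perp n p j\<close>.\<close>

lemma unit_perp_nonempty:
  assumes "j < n" and orth: "\<And>l l'. l < j \<Longrightarrow> l' < j \<Longrightarrow> dot n (p l) (p l') = (if l = l' then 1 else 0)"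
  shows "unit_perp n p j \<noteq> {}"
proof -
  have "\<exists>m<n. \<exists>i<n. (if i = m then 1 else 0) \<noteq> (\<Sum>l<j. p l m * p l i)"
  proof (rule ccontr)
    assume "\<not> ?thesis"
    then have e: "\<And>m i. m < n \<Longrightarrow> i < n \<Longrightarrow> (\<Sum>l<j. p l m * p l i) = (if i = m then 1 else 0)" by force
    have "real n = (\<Sum>m<n. (\<Sum>l<j. p l m * p l m))" using e by simp
    also have "\<dots> = (\<Sum>l<j. dot n (p l) (p l))" unfolding dot_def by (rule sum.swap)
    also have "\<dots> = real j" using orth by simp
    finally show False using \<open>j < n\<close> by simp
  qed
  then obtain m i where mi: "m < n" "i < n" "(if i = m then 1 else 0) \<noteq> (\<Sum>l<j. p l m * p l i)" by blast
  define x where "x = (\<lambda>i. if i < n then (if i = m then 1 else 0) - (\<Sum>l<j. p l m * p l i) else 0)"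
  have s: "\<forall>i\<ge>n. x i = 0" by (simp add: x_def)
  have nz: "\<exists>i<n. x i \<noteq> 0" using mi by (intro exI[of _ i]) (auto simp: x_def)
  have o: "dot n x (p l0) = 0" if l0: "l0 < j" for l0
  proof -
    have "dot n x (p l0) = (\<Sum>i<n. (if i = m then 1 else 0) * p l0 i) - (\<Sum>i<n. (\<Sum>l<j. p l m * p l i) * p l0 i)"
      unfolding dot_def x_def by (simp add: sum_subtractf left_diff_distrib)
    also have "(\<Sum>i<n. (if i = m then 1 else 0) * p l0 i) = p l0 m"
      using mi by (simp add: of_bool_def[symmetric] sum.delta)
    also have "(\<Sum>i<n. (\<Sum>l<j. p l m * p l i) * p l0 i) = (\<Sum>l<j. p l m * dot n (p l) (p l0))"
      unfolding dot_def sum_distrib_left sum_distrib_right by (subst sum.swap) (simp add: mult.assoc)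
    also have "\<dots> = (\<Sum>l<j. p l m * (if l = l0 then 1 else 0))" using orth l0 by (intro sum.cong) auto
    also have "\<dots> = p l0 m" using l0 by (simp add: of_bool_def[symmetric] sum.delta)
    finally show ?thesis by simp
  qed
  define y where "y = (\<lambda>i. (1 / sqrt (dot n x x)) * x i)"
  have "y \<in> unit_perp n p j" unfolding unit_perp_def using normalize_finite_support[OF s nz] o unfolding y_def by auto
  then show ?thesis by auto
qed

text \<open>Maximising \<open>\<parallel>M x\<parallel>\<^sup>2\<close> successively on the orthogonal complements of the vectors found
  so far yields the right singular vectors of \<open>M\<close>.\<close>

definition stretch :: "nat \<Rightarrow> (nat\<Rightarrow>nat\<Rightarrow>real) \<Rightarrow> (nat\<Rightarrow>real) \<Rightarrow> real" where
  "stretch n M x = dot n (mat_app n M x) (mat_app n M x)"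

lemma dot_add_scaled: "dot n (\<lambda>i. x i + b * y i) z = dot n x z + b * dot n y z"
  "dot n z (\<lambda>i. x i + b * y i) = dot n z x + b * dot n z y"
  unfolding dot_def by (auto simp: sum.distrib sum_distrib_left algebra_simps intro!: sum.cong)

lemma mat_app_add_scaled: "mat_app n M (\<lambda>i. x i + b * y i) = (\<lambda>i. mat_app n M x i + b * mat_app n M y i)"
  unfolding mat_app_def by (auto simp: sum.distrib sum_distrib_left algebra_simps intro!: sum.cong)

lemma dot_self_add_scaled: "dot n (\<lambda>i. x i + t * y i) (\<lambda>i. x i + t * y i) = dot n x x + 2 * t * dot n x y + t^2 * dot n y y"
proof -
  have "dot n (\<lambda>i. x i + t * y i) (\<lambda>i. x i + t * y i) = (\<Sum>i<n. x i * x i + 2 * t * (x i * y i) + t^2 * (y i * y i))"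
    unfolding dot_def by (intro sum.cong) (auto simp: power2_eq_square algebra_simps)
  also have "\<dots> = dot n x x + 2 * t * dot n x y + t^2 * dot n y y"
    unfolding dot_def by (simp add: sum.distrib sum_distrib_left)
  finally show ?thesis .
qed

lemma mat_app_scale: "mat_app n M (\<lambda>i. a * x i) = (\<lambda>i. a * mat_app n M x i)"
  unfolding mat_app_def by (auto simp: sum_distrib_left algebra_simps intro!: sum.cong)

lemma stretch_attains_max:
  assumes "unit_perp n p j \<noteq> {}"
  shows "\<exists>v\<in>unit_perp n p j. \<forall>x\<in>unit_perp n p j. stretch n M x \<le> stretch n M v"
proof -
  have "continuous_on (unit_perp n p j) (stretch n M)"
    unfolding stretch_def by (rule continuous_on_subset[OF continuous_on_dot[OF continuous_on_mat_app continuous_on_mat_app]]) auto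
  then show ?thesis using continuous_attains_sup[OF compact_unit_perp assms] by blast
qed

lemma quadratic_nonpos_imp_linear_coeff_zero:
  fixes a C :: real
  assumes "\<And>t. 2 * t * a + t^2 * C \<le> 0"
  shows "a = 0"
proof (rule ccontr)
  assume a: "a \<noteq> 0"
  define s where "s = 1 / (\<bar>C\<bar> + 1)"
  have s: "s > 0" "s * \<bar>C\<bar> < 1" unfolding s_def by (auto simp: field_simps)
  have "2 * (s*a) * a + (s*a)^2 * C \<le> 0" by (rule assms)
  then have "(s * a^2) * (2 + s * C) \<le> 0" by (simp add: power2_eq_square algebra_simps)
  moreover have "s * a^2 > 0" using a s by simp
  moreover have "2 + s * C > 0"
  proof -
    have "-(s*\<bar>C\<bar>) \<le> s*C" using mult_left_mono[of "-\<bar>C\<bar>" C s] s by auto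
    then show ?thesis using s by linarith
  qed
  ultimately show False using mult_pos_pos[of "s * a^2" "2 + s * C"] by linarith
qed

lemma stretch_le_max_times_dot_self:
  assumes v: "v \<in> unit_perp n p j" and max: "\<forall>x\<in>unit_perp n p j. stretch n M x \<le> stretch n M v"
    and z: "\<forall>i\<ge>n. z i = 0" "\<forall>l<j. dot n z (p l) = 0"
  shows "stretch n M z \<le> stretch n M v * dot n z z"
proof (cases "\<exists>i<n. z i \<noteq> 0")
  case False
  then have "mat_app n M z = (\<lambda>i. 0)" unfolding mat_app_def by (auto intro!: ext sum.neutral)
  then have "stretch n M z = 0" by (simp add: stretch_def dot_def)
  moreover have "stretch n M v \<ge> 0" unfolding stretch_def by (rule dot_self_nonneg)
  ultimately show ?thesis using dot_self_nonneg[of n z] by simp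
next
  case True
  define c where "c = 1 / sqrt (dot n z z)"
  define y where "y = (\<lambda>i. c * z i)"
  have pz: "dot n z z > 0" using True dot_self_pos by blast
  have "y \<in> unit_perp n p j" unfolding unit_perp_def using normalize_finite_support[OF z(1) True] z(2) unfolding y_def c_def by auto
  then have "stretch n M y \<le> stretch n M v" using max by blast
  moreover have "stretch n M y = c^2 * stretch n M z" unfolding stretch_def y_def mat_app_scale dot_scale by (simp add: power2_eq_square)
  moreover have "c^2 = 1 / dot n z z" using pz by (simp add: c_def power_divide)
  ultimately show ?thesis using pz by (simp add: field_simps)
qed

lemma stretch_maximizer_orthogonal:
  assumes v: "v \<in> unit_perp n p j" and max: "\<forall>x\<in>unit_perp n p j. stretch n M x \<le> stretch n M v"
    and y: "\<forall>i\<ge>n. y i = 0" "\<forall>l<j. dot n y (p l) = 0" "dot n v y = 0"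
  shows "dot n (mat_app n M v) (mat_app n M y) = 0"
proof (rule quadratic_nonpos_imp_linear_coeff_zero)
  fix t :: real
  define z where "z = (\<lambda>i. v i + t * y i)"
  have vK: "\<forall>i\<ge>n. v i = 0" "dot n v v = 1" "\<forall>l<j. dot n v (p l) = 0" using v by (auto simp: unit_perp_def)
  have zs: "\<forall>i\<ge>n. z i = 0" using vK y by (simp add: z_def)
  have zo: "\<forall>l<j. dot n z (p l) = 0" using vK y by (simp add: z_def dot_add_scaled)
  have "stretch n M z \<le> stretch n M v * dot n z z" by (rule stretch_le_max_times_dot_self[OF v max zs zo])
  moreover have "dot n z z = 1 + t^2 * dot n y y"
    unfolding z_def dot_self_add_scaled using vK y by simp
  moreover have "stretch n M z = stretch n M v + 2 * t * dot n (mat_app n M v) (mat_app n M y) + t^2 * stretch n M y"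
    unfolding stretch_def z_def mat_app_add_scaled dot_self_add_scaled by simp
  ultimately show "2 * t * dot n (mat_app n M v) (mat_app n M y) + t^2 * (stretch n M y - stretch n M v * dot n y y) \<le> 0"
    by (simp add: algebra_simps)
qed

definition greedy_next :: "nat \<Rightarrow> (nat\<Rightarrow>nat\<Rightarrow>real) \<Rightarrow> (nat \<Rightarrow> nat \<Rightarrow> real) \<Rightarrow> nat \<Rightarrow> (nat \<Rightarrow> real)" where
  "greedy_next n M p j = (SOME v. v \<in> unit_perp n p j \<and> (\<forall>x\<in>unit_perp n p j. stretch n M x \<le> stretch n M v))"

fun greedy_list :: "nat \<Rightarrow> (nat\<Rightarrow>nat\<Rightarrow>real) \<Rightarrow> nat \<Rightarrow> (nat\<Rightarrow>real) list" where
  "greedy_list n M 0 = []"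
| "greedy_list n M (Suc j) = greedy_list n M j @ [greedy_next n M (\<lambda>l. greedy_list n M j ! l) j]"

definition greedy_basis :: "nat \<Rightarrow> (nat\<Rightarrow>nat\<Rightarrow>real) \<Rightarrow> nat \<Rightarrow> (nat\<Rightarrow>real)" where
  "greedy_basis n M l = greedy_list n M (Suc l) ! l"

lemma length_greedy_list: "length (greedy_list n M j) = j"
  by (induction j) auto

lemma nth_greedy_list: "l < j \<Longrightarrow> greedy_list n M j ! l = greedy_basis n M l"
proof (induction j)
  case 0 then show ?case by simp
next
  case (Suc j)
  show ?case
  proof (cases "l < j")
    case True then show ?thesis using Suc by (simp add: nth_append length_greedy_list)
  next
    case False then have "l = j" using Suc by simp
    then show ?thesis by (simp add: greedy_basis_def)
  qed
qed

lemma unit_perp_cong: "(\<And>l. l < j \<Longrightarrow> p l = q l) \<Longrightarrow> unit_perp n p j = unit_perp n q j"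
  unfolding unit_perp_def by auto

lemma unit_perp_antimono: "j \<le> j' \<Longrightarrow> unit_perp n p j' \<subseteq> unit_perp n p j"
  unfolding unit_perp_def by auto

lemma greedy_basis_unfold: "greedy_basis n M j = greedy_next n M (greedy_basis n M) j"
proof -
  have "greedy_basis n M j = greedy_next n M (\<lambda>l. greedy_list n M j ! l) j" by (simp add: greedy_basis_def nth_append length_greedy_list)
  also have "\<dots> = greedy_next n M (greedy_basis n M) j"
    unfolding greedy_next_def using unit_perp_cong[of j "\<lambda>l. greedy_list n M j ! l" "greedy_basis n M" n] nth_greedy_list[of _ j n M] by simp
  finally show ?thesis .
qed

lemma orthonormal_if_unit_perp:
  assumes "\<And>l. l < j \<Longrightarrow> p l \<in> unit_perp n p l" and "l < j" "l' < j"
  shows "dot n (p l) (p l') = (if l = l' then 1 else 0)"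
  using assms(1)[OF assms(2)] assms(1)[OF assms(3)]
  by (cases l l' rule: linorder_cases) (auto simp: unit_perp_def dot_commute)

lemma greedy_basis_maximizes:
  "j < n \<Longrightarrow> greedy_basis n M j \<in> unit_perp n (greedy_basis n M) j \<and>
     (\<forall>x\<in>unit_perp n (greedy_basis n M) j. stretch n M x \<le> stretch n M (greedy_basis n M j))"
proof (induction j rule: less_induct)
  case (less j)
  have "dot n (greedy_basis n M l) (greedy_basis n M l') = (if l = l' then 1 else 0)" if "l < j" "l' < j" for l l'
    using less that by (intro orthonormal_if_unit_perp[where j=j]) auto
  then have "unit_perp n (greedy_basis n M) j \<noteq> {}" using unit_perp_nonempty less.prems by blast
  then have "\<exists>v. v \<in> unit_perp n (greedy_basis n M) j \<and> (\<forall>x\<in>unit_perp n (greedy_basis n M) j. stretch n M x \<le> stretch n M v)"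
    using stretch_attains_max by blast
  then show ?case unfolding greedy_basis_unfold[of n M j] greedy_next_def by (rule someI_ex)
qed

lemma greedy_basis_orthonormal:
  "l < n \<Longrightarrow> l' < n \<Longrightarrow> dot n (greedy_basis n M l) (greedy_basis n M l') = (if l = l' then 1 else 0)"
  using greedy_basis_maximizes by (intro orthonormal_if_unit_perp[where j=n]) auto

lemma greedy_basis_support: "l < n \<Longrightarrow> i \<ge> n \<Longrightarrow> greedy_basis n M l i = 0"
  using greedy_basis_maximizes[of l n M] by (auto simp: unit_perp_def)

lemma greedy_basis_image_orthogonal: "l < l' \<Longrightarrow> l' < n \<Longrightarrow> dot n (mat_app n M (greedy_basis n M l)) (mat_app n M (greedy_basis n M l')) = 0"
proof -
  assume a: "l < l'" "l' < n"
  have g: "greedy_basis n M l \<in> unit_perp n (greedy_basis n M) l" "\<forall>x\<in>unit_perp n (greedy_basis n M) l. stretch n M x \<le> stretch n M (greedy_basis n M l)"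
    using greedy_basis_maximizes[of l n M] a by auto
  have K': "greedy_basis n M l' \<in> unit_perp n (greedy_basis n M) l'" using greedy_basis_maximizes[of l' n M] a by auto
  show ?thesis
  proof (rule stretch_maximizer_orthogonal[OF g])
    show "\<forall>i\<ge>n. greedy_basis n M l' i = 0" using K' by (auto simp: unit_perp_def)
    show "\<forall>i<l. dot n (greedy_basis n M l') (greedy_basis n M i) = 0" using K' a by (auto simp: unit_perp_def)
    show "dot n (greedy_basis n M l) (greedy_basis n M l') = 0" using greedy_basis_orthonormal[of l n l' M] a by simp
  qed
qed

lemma stretch_greedy_basis_antimono: "l \<le> l' \<Longrightarrow> l' < n \<Longrightarrow> stretch n M (greedy_basis n M l') \<le> stretch n M (greedy_basis n M l)"
proof -
  assume a: "l \<le> l'" "l' < n"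
  have "greedy_basis n M l' \<in> unit_perp n (greedy_basis n M) l" using greedy_basis_maximizes[of l' n M] a unit_perp_antimono[OF a(1)] by auto
  then show ?thesis using greedy_basis_maximizes[of l n M] a by auto
qed

lemma index_mult_mat_sum: "A \<in> carrier_mat n n \<Longrightarrow> B \<in> carrier_mat n n \<Longrightarrow> i < n \<Longrightarrow> j < n \<Longrightarrow>
   (A * B) $$ (i,j) = (\<Sum>k<n. A $$ (i,k) * B $$ (k,j))"
  by (simp add: scalar_prod_def row_def col_def atLeast0LessThan)

lemma index_transpose_mult_self_sum: "A \<in> carrier_mat n n \<Longrightarrow> i < n \<Longrightarrow> j < n \<Longrightarrow>
   (A\<^sup>T * A) $$ (i,j) = (\<Sum>k<n. A $$ (k,i) * A $$ (k,j))"
  by (subst index_mult_mat_sum[of _ n]) (auto intro!: sum.cong)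

lemma det_transpose_mult_self: "A \<in> carrier_mat n n \<Longrightarrow> Determinant.det (A\<^sup>T * A) = (Determinant.det A)^2"
  by (simp add: det_mult det_transpose power2_eq_square)

lemma prod_list_map_upt: "prod_list (map f [0..<n]) = (\<Prod>i<n. f i)"
  by (induction n) auto

lemma det_diagonal: assumes "A \<in> carrier_mat n n" "\<And>i j. i < n \<Longrightarrow> j < n \<Longrightarrow> i \<noteq> j \<Longrightarrow> A $$ (i,j) = 0"
  shows "Determinant.det A = (\<Prod>i<n. A $$ (i,i))"
proof -
  have "Determinant.det A = prod_list (diag_mat A)"
    by (rule det_upper_triangular[OF _ assms(1)]) (use assms in auto)
  also have "\<dots> = (\<Prod>i<n. A $$ (i,i))" using assms(1) by (simp add: diag_mat_def prod_list_map_upt)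
  finally show ?thesis .
qed

lemma det_lower_triangular_prod: assumes "A \<in> carrier_mat n n" "\<And>i j. i < j \<Longrightarrow> j < n \<Longrightarrow> A $$ (i,j) = 0"
  shows "Determinant.det A = (\<Prod>i<n. A $$ (i,i))"
proof -
  have "Determinant.det A = prod_list (diag_mat A)"
    by (rule det_lower_triangular[OF _ assms(1)]) (use assms in auto)
  also have "\<dots> = (\<Prod>i<n. A $$ (i,i))" using assms(1) by (simp add: diag_mat_def prod_list_map_upt)
  finally show ?thesis .
qed

text \<open>With \<open>V\<close> the orthogonal matrix of singular vectors, \<open>(M V)\<^sup>T (M V)\<close> is diagonal with
  entries \<open>\<parallel>M v\<^sub>i\<parallel>\<^sup>2\<close>, so their product is \<open>det (M V)\<^sup>2 = det M\<^sup>2\<close>.\<close>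

lemma prod_stretch_greedy_basis:
  assumes tri: "\<And>i j. i < j \<Longrightarrow> j < n \<Longrightarrow> M i j = 0"
  shows "(\<Prod>i<n. stretch n M (greedy_basis n M i)) = (\<Prod>i<n. M i i)^2"
proof -
  define Vm where "Vm = mat n n (\<lambda>(i,j). greedy_basis n M j i)"
  define Mm where "Mm = mat n n (\<lambda>(i,j). M i j)"
  have V: "Vm \<in> carrier_mat n n" and Mc: "Mm \<in> carrier_mat n n" by (auto simp: Vm_def Mm_def)
  have MV: "Mm * Vm \<in> carrier_mat n n" using V Mc by auto
  have "Vm\<^sup>T * Vm = 1\<^sub>m n"
  proof (rule eq_matI)
    fix i j assume ij: "i < dim_row (1\<^sub>m n)" "j < dim_col (1\<^sub>m n)"
    then have "(Vm\<^sup>T * Vm) $$ (i,j) = (\<Sum>k<n. greedy_basis n M i k * greedy_basis n M j k)"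
      using V by (subst index_mult_mat_sum[of _ n]) (auto simp: Vm_def)
    also have "\<dots> = (if i = j then 1 else 0)" using greedy_basis_orthonormal[of i n j M] ij by (simp add: dot_def)
    finally show "(Vm\<^sup>T * Vm) $$ (i,j) = 1\<^sub>m n $$ (i,j)" using ij by simp
  qed (use V in auto)
  then have dV: "(Determinant.det Vm)^2 = 1" using det_transpose_mult_self[OF V] by simp
  have MVe: "(Mm * Vm) $$ (k,j) = mat_app n M (greedy_basis n M j) k" if "k < n" "j < n" for k j
    using that V Mc by (subst index_mult_mat_sum[of _ n]) (auto simp: Vm_def Mm_def mat_app_def)
  have "Determinant.det ((Mm * Vm)\<^sup>T * (Mm * Vm)) = (\<Prod>i<n. ((Mm * Vm)\<^sup>T * (Mm * Vm)) $$ (i,i))"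
  proof (rule det_diagonal)
    show "(Mm * Vm)\<^sup>T * (Mm * Vm) \<in> carrier_mat n n" using MV by auto
    fix i j assume ij: "i < n" "j < n" "i \<noteq> j"
    have "((Mm * Vm)\<^sup>T * (Mm * Vm)) $$ (i,j) = (\<Sum>k<n. (Mm * Vm) $$ (k,i) * (Mm * Vm) $$ (k,j))"
      using MV ij by (intro index_transpose_mult_self_sum) auto
    also have "\<dots> = dot n (mat_app n M (greedy_basis n M i)) (mat_app n M (greedy_basis n M j))" using ij by (simp add: MVe dot_def)
    also have "\<dots> = 0" using greedy_basis_image_orthogonal[of i j n M] greedy_basis_image_orthogonal[of j i n M] ij
      by (cases "i < j") (auto simp: dot_commute)
    finally show "((Mm * Vm)\<^sup>T * (Mm * Vm)) $$ (i,j) = 0" .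
  qed
  also have "\<dots> = (\<Prod>i<n. stretch n M (greedy_basis n M i))"
  proof (rule prod.cong)
    fix i assume i: "i \<in> {..<n}"
    have "((Mm * Vm)\<^sup>T * (Mm * Vm)) $$ (i,i) = (\<Sum>k<n. (Mm * Vm) $$ (k,i) * (Mm * Vm) $$ (k,i))"
      using MV i by (intro index_transpose_mult_self_sum) auto
    also have "\<dots> = stretch n M (greedy_basis n M i)" using i by (simp add: MVe dot_def stretch_def)
    finally show "((Mm * Vm)\<^sup>T * (Mm * Vm)) $$ (i,i) = stretch n M (greedy_basis n M i)" .
  qed simp
  finally have "(\<Prod>i<n. stretch n M (greedy_basis n M i)) = (Determinant.det (Mm * Vm))^2" using det_transpose_mult_self[OF MV] by simp
  also have "\<dots> = (Determinant.det Mm)^2" using det_mult[OF Mc V] dV by (simp add: power_mult_distrib)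
  also have "Determinant.det Mm = (\<Prod>i<n. M i i)"
    using det_lower_triangular_prod[OF Mc] tri by (simp add: Mm_def)
  finally show ?thesis .
qed

section \<open>Gelfand numbers of triangular matrices on \<open>\<ell>\<^sub>2\<close>\<close>

lemma underdetermined_homogeneous_nontrivial:
  fixes r :: "'l \<Rightarrow> nat \<Rightarrow> real"
  assumes "finite L" "card L < m"
  shows "\<exists>c. (\<forall>i\<ge>m. c i = 0) \<and> (\<exists>i<m. c i \<noteq> 0) \<and> (\<forall>l\<in>L. (\<Sum>i<m. r l i * c i) = 0)"
  using assms
proof (induction m arbitrary: L r)
  case 0 then show ?case by simp
next
  case (Suc m)
  show ?case
  proof (cases "\<forall>l\<in>L. r l m = 0")
    case True
    define c where "c = (\<lambda>i. if i = m then 1 else (0::real))"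
    have "(\<Sum>i<Suc m. r l i * c i) = r l m" for l
      unfolding c_def by (simp add: of_bool_def[symmetric] sum.delta)
    then show ?thesis using True by (intro exI[of _ c]) (auto simp: c_def)
  next
    case False
    then obtain l0 where l0: "l0 \<in> L" "r l0 m \<noteq> 0" by auto
    define r' where "r' = (\<lambda>l i. r l i - (r l m / r l0 m) * r l0 i)"
    have "card (L - {l0}) < m" using Suc.prems l0 card_gt_0_iff[of L] by (auto simp: card_Diff_singleton)
    from Suc.IH[OF _ this, of r'] Suc.prems obtain c' where
      c': "\<forall>i\<ge>m. c' i = 0" "\<exists>i<m. c' i \<noteq> 0" "\<forall>l\<in>L - {l0}. (\<Sum>i<m. r' l i * c' i) = 0" by auto
    define t where "t = - (\<Sum>i<m. r l0 i * c' i) / r l0 m"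
    define c where "c = (\<lambda>i. c' i + (if i = m then t else 0))"
    have eq: "(\<Sum>i<Suc m. r l i * c i) = (\<Sum>i<m. r l i * c' i) + r l m * t" for l
      using c' by (simp add: c_def algebra_simps)
    have "(\<Sum>i<Suc m. r l i * c i) = 0" if l: "l \<in> L" for l
    proof (cases "l = l0")
      case True then show ?thesis unfolding eq using l0 by (simp add: t_def)
    next
      case False
      have "0 = (\<Sum>i<m. r' l i * c' i)" using c' l False by auto
      also have "\<dots> = (\<Sum>i<m. r l i * c' i) - (r l m / r l0 m) * (\<Sum>i<m. r l0 i * c' i)"
        unfolding r'_def by (simp add: algebra_simps sum_subtractf sum_distrib_left)
      also have "\<dots> = (\<Sum>i<m. r l i * c' i) + r l m * t" using l0 by (simp add: t_def)
      finally show ?thesis unfolding eq by simp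
    qed
    moreover have "\<forall>i\<ge>Suc m. c i = 0" using c' by (simp add: c_def)
    moreover have "\<exists>i<Suc m. c i \<noteq> 0" using c' by (auto simp: c_def)
    ultimately show ?thesis by blast
  qed
qed

lemma summable_square_finite_support: "(\<forall>i\<ge>n. f i = 0) \<Longrightarrow> summable (\<lambda>i. (f i :: real)\<^sup>2)"
  by (rule summable_finite[of "{..<n}"]) auto

lemma suminf_square_finite_support: "(\<forall>i\<ge>n. f i = 0) \<Longrightarrow> (\<Sum>i. (f i :: real)\<^sup>2) = (\<Sum>i<n. (f i)\<^sup>2)"
  by (rule suminf_finite) auto

lemma l2_linearD: "l2_linear L \<Longrightarrow> f \<in> l2 \<Longrightarrow> g \<in> l2 \<Longrightarrow> L (\<lambda>i. a * f i + b * g i) = a *\<^sub>R L f + b *\<^sub>R L g"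
  by (simp add: l2_linear_def)

lemma finite_support_in_l2: "(\<forall>i\<ge>n. f i = 0) \<Longrightarrow> f \<in> l2"
  unfolding l2_def using summable_square_finite_support by blast

lemma l2norm_finite_support: "(\<forall>i\<ge>n. f i = 0) \<Longrightarrow> l2norm f = sqrt (dot n f f)"
  unfolding l2norm_def dot_def using suminf_square_finite_support[of n f] by (simp add: power2_eq_square)

definition lincomb :: "(nat \<Rightarrow> real) \<Rightarrow> (nat \<Rightarrow> nat \<Rightarrow> real) \<Rightarrow> nat \<Rightarrow> nat \<Rightarrow> real" where
  "lincomb c v m = (\<lambda>j. \<Sum>i<m. c i * v i j)"

lemma lincomb_Suc: "lincomb c v (Suc m) = (\<lambda>j. 1 * lincomb c v m j + c m * v m j)"
  unfolding lincomb_def by auto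

lemma lincomb_support: "(\<And>i. i < m \<Longrightarrow> \<forall>j\<ge>n. v i j = 0) \<Longrightarrow> \<forall>j\<ge>n. lincomb c v m j = 0"
  unfolding lincomb_def by auto

lemma l2_linear_zero: "l2_linear L \<Longrightarrow> L (\<lambda>i. 0) = 0"
proof -
  assume L: "l2_linear L"
  have z: "(\<lambda>i. 0::real) \<in> l2" by (rule finite_support_in_l2[of 0]) auto
  show ?thesis using l2_linearD[OF L z z, of 0 0] by simp
qed

lemma l2_linear_lincomb:
  assumes L: "l2_linear L" and v: "\<And>i. i < m \<Longrightarrow> \<forall>j\<ge>n. v i j = 0"
  shows "L (lincomb c v m) = (\<Sum>i<m. c i *\<^sub>R L (v i))"
  using v
proof (induction m)
  case 0 then show ?case using l2_linear_zero[OF L] by (simp add: lincomb_def)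
next
  case (Suc m)
  have a: "lincomb c v m \<in> l2" by (rule finite_support_in_l2[of n], rule lincomb_support) (use Suc.prems in auto)
  have b: "v m \<in> l2" by (rule finite_support_in_l2[of n]) (use Suc.prems in auto)
  have "L (lincomb c v (Suc m)) = 1 *\<^sub>R L (lincomb c v m) + c m *\<^sub>R L (v m)"
    unfolding lincomb_Suc by (rule l2_linearD[OF L a b])
  then show ?case using Suc by simp
qed

lemma dot_self_lincomb: "dot n (lincomb c v m) (lincomb c v m) = (\<Sum>i<m. \<Sum>i'<m. c i * c i' * dot n (v i) (v i'))"
  unfolding dot_def lincomb_def sum_distrib_left sum_distrib_right
  by (subst sum.swap, rule sum.cong, simp, subst sum.swap, rule sum.cong, simp, rule sum.cong) (auto simp: algebra_simps)

lemma dot_self_lincomb_orthogonal: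
  assumes "\<And>i i'. i < m \<Longrightarrow> i' < m \<Longrightarrow> i \<noteq> i' \<Longrightarrow> dot n (v i) (v i') = 0"
  shows "dot n (lincomb c v m) (lincomb c v m) = (\<Sum>i<m. (c i)\<^sup>2 * dot n (v i) (v i))"
proof -
  have "dot n (lincomb c v m) (lincomb c v m) = (\<Sum>i<m. \<Sum>i'<m. c i * c i' * dot n (v i) (v i'))"
    by (rule dot_self_lincomb)
  also have "\<dots> = (\<Sum>i<m. \<Sum>i'<m. if i = i' then (c i)\<^sup>2 * dot n (v i) (v i) else 0)"
    using assms by (intro sum.cong) (auto simp: power2_eq_square)
  also have "\<dots> = (\<Sum>i<m. (c i)\<^sup>2 * dot n (v i) (v i))" by simp
  finally show ?thesis .
qed

lemma mat_app_lincomb: "mat_app n W (lincomb c v m) = lincomb c (\<lambda>i. mat_app n W (v i)) m"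
  unfolding mat_app_def lincomb_def sum_distrib_left by (rule ext, subst sum.swap) (auto intro!: sum.cong simp: algebra_simps)

lemma stretch_lincomb_greedy_basis:
  assumes "k < n"
  shows "stretch n W (lincomb c (greedy_basis n W) (Suc k)) = (\<Sum>i<Suc k. (c i)\<^sup>2 * stretch n W (greedy_basis n W i))"
  unfolding stretch_def mat_app_lincomb
proof (rule dot_self_lincomb_orthogonal)
  fix i i' assume "i < Suc k" "i' < Suc k" "i \<noteq> i'"
  then show "dot n (mat_app n W (greedy_basis n W i)) (mat_app n W (greedy_basis n W i')) = 0"
    using greedy_basis_image_orthogonal[of i i' n W] greedy_basis_image_orthogonal[of i' i n W] assms
    by (cases "i < i'") (auto simp: dot_commute)
qed

lemma unit_lincomb_in_kernels:
  fixes L :: "nat \<Rightarrow> (nat \<Rightarrow> real) \<Rightarrow> real"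
  assumes L: "\<And>l. l < k \<Longrightarrow> l2_linear (L l)" and v: "\<And>i. i < Suc k \<Longrightarrow> \<forall>j\<ge>n. v i j = 0"
  obtains c where "(\<Sum>i<Suc k. (c i)\<^sup>2) = 1" "\<And>l. l < k \<Longrightarrow> L l (lincomb c v (Suc k)) = 0"
proof -
  obtain c where c: "\<forall>i\<ge>Suc k. c i = 0" "\<exists>i<Suc k. c i \<noteq> 0"
      "\<forall>l\<in>{..<k}. (\<Sum>i<Suc k. L l (v i) * c i) = 0"
    using underdetermined_homogeneous_nontrivial[of "{..<k}" "Suc k" "\<lambda>l i. L l (v i)"] by auto
  define s where "s = dot (Suc k) c c"
  have s: "s > 0" unfolding s_def using c dot_self_pos by blast
  define c' where "c' = (\<lambda>i. (1 / sqrt s) * c i)"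
  have "(\<Sum>i<Suc k. (c' i)\<^sup>2) = (\<Sum>i<Suc k. (1/s) * (c i * c i))"
    unfolding c'_def using s by (intro sum.cong) (auto simp: power_mult_distrib power2_eq_square[of "c _"] power_divide)
  also have "\<dots> = (1/s) * s" by (simp only: s_def dot_def sum_distrib_left)
  finally have "(\<Sum>i<Suc k. (c' i)\<^sup>2) = 1" using s by simp
  moreover have "L l (lincomb c' v (Suc k)) = 0" if l: "l < k" for l
  proof -
    have "L l (lincomb c' v (Suc k)) = (\<Sum>i<Suc k. c' i * L l (v i))"
      using l2_linear_lincomb[OF L[OF l] v] by simp
    also have "\<dots> = (1 / sqrt s) * (\<Sum>i<Suc k. L l (v i) * c i)"
      unfolding c'_def sum_distrib_left by (rule sum.cong) (auto simp: mult.commute)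
    also have "\<dots> = 0" using c(3) l by simp
    finally show ?thesis .
  qed
  ultimately show ?thesis by (rule that)
qed

lemma half_l2dist_antipodal:
  assumes T: "\<forall>a\<in>l2. T a = (\<lambda>j. if j < n then mat_app n W a j else 0)" and x: "x \<in> l2"
  shows "l2dist (T x) (T (\<lambda>j. - x j)) / 2 = sqrt (stretch n W x)"
proof -
  have "(\<lambda>j. - x j) \<in> l2" using x by (simp add: l2_def)
  then have dif: "(\<lambda>j. T x j - T (\<lambda>j. - x j) j) = (\<lambda>j. 2 * (if j < n then mat_app n W x j else 0))"
    using T x mat_app_scale[of n W "-1" x] by auto
  have "l2dist (T x) (T (\<lambda>j. - x j))
      = sqrt (dot n (\<lambda>j. 2 * (if j < n then mat_app n W x j else 0)) (\<lambda>j. 2 * (if j < n then mat_app n W x j else 0)))"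
    unfolding l2dist_def dif by (rule l2norm_finite_support) auto
  also have "\<dots> = 2 * sqrt (stretch n W x)"
    unfolding dot_scale stretch_def by (simp add: dot_def real_sqrt_mult)
  finally show ?thesis by simp
qed

text \<open>The \<open>k\<close>-th singular value bounds \<open>c\<^sub>k\<close> from below: any \<open>k\<close> functionals vanish on a unit
  vector spanned by the first \<open>k + 1\<close> singular vectors, and the matrix stretches such a
  vector at least as much as the \<open>k\<close>-th one.\<close>

lemma stretch_greedy_basis_le_gelfand:
  assumes T: "\<forall>a\<in>l2. T a = (\<lambda>j. if j < n then mat_app n W a j else 0)" and k: "k < n"
  shows "ennreal (sqrt (stretch n W (greedy_basis n W k))) \<le> gelfand_gen l2_dual l2dist k T l2ball"
  unfolding gelfand_gen_def
proof (rule INF_greatest)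
  fix L assume L: "L \<in> {L. \<forall>k'<k. L k' \<in> l2_dual}"
  have Llin: "l2_linear (L l)" if "l < k" for l using L that by (auto simp: l2_dual_def)
  have vsupp: "\<And>i. i < Suc k \<Longrightarrow> \<forall>j\<ge>n. greedy_basis n W i j = 0" using greedy_basis_support k by auto
  have vorth: "\<And>i i'. i < Suc k \<Longrightarrow> i' < Suc k \<Longrightarrow> dot n (greedy_basis n W i) (greedy_basis n W i') = (if i = i' then 1 else 0)"
    using greedy_basis_orthonormal k by auto
  obtain c where c1: "(\<Sum>i<Suc k. (c i)\<^sup>2) = 1"
    and Lx: "\<And>l. l < k \<Longrightarrow> L l (lincomb c (greedy_basis n W) (Suc k)) = 0"
    by (rule unit_lincomb_in_kernels[of k L n "greedy_basis n W"]) (use Llin vsupp in auto)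
  define x where "x = lincomb c (greedy_basis n W) (Suc k)"
  have xs: "\<forall>j\<ge>n. x j = 0" unfolding x_def by (auto intro!: lincomb_support vsupp)
  have xn: "dot n x x = 1" unfolding x_def by (subst dot_self_lincomb_orthogonal) (use vorth c1 in auto)
  have xl2: "x \<in> l2" by (rule finite_support_in_l2[OF xs])
  have xb: "x \<in> l2ball" "(\<lambda>j. - x j) \<in> l2ball"
    using xn xl2 l2norm_finite_support[OF xs] by (auto simp: l2ball_def l2_def l2norm_def)
  have Ly: "L l (\<lambda>j. - x j) = 0" if l: "l < k" for l
    using l2_linearD[OF Llin[OF l] xl2 xl2, of "-1" 0] Lx[OF l] by (simp add: x_def)
  have "stretch n W (greedy_basis n W k) = (\<Sum>i<Suc k. (c i)\<^sup>2 * stretch n W (greedy_basis n W k))"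
    using c1 by (simp add: sum_distrib_right[symmetric])
  also have "\<dots> \<le> (\<Sum>i<Suc k. (c i)\<^sup>2 * stretch n W (greedy_basis n W i))"
    using stretch_greedy_basis_antimono k by (intro sum_mono mult_left_mono) auto
  also have "\<dots> = stretch n W x" unfolding x_def by (rule stretch_lincomb_greedy_basis[OF k, symmetric])
  finally have "ennreal (sqrt (stretch n W (greedy_basis n W k))) \<le> ennreal (l2dist (T x) (T (\<lambda>j. - x j)) / 2)"
    unfolding half_l2dist_antipodal[OF T xl2] by (simp add: ennreal_leI)
  also have "\<dots> \<le> (SUP p\<in>{(f, g). f \<in> l2ball \<and> g \<in> l2ball \<and> (\<forall>k'<k. L k' f = L k' g)}. ennreal (l2dist (T (fst p)) (T (snd p)) / 2))"
    using xb Lx Ly by (intro SUP_upper2[of "(x, \<lambda>j. - x j)"]) (auto simp: x_def)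
  finally show "ennreal (sqrt (stretch n W (greedy_basis n W k))) \<le> (SUP p\<in>{(f, g). f \<in> l2ball \<and> g \<in> l2ball \<and> (\<forall>k'<k. L k' f = L k' g)}. ennreal (l2dist (T (fst p)) (T (snd p)) / 2))" .
qed

lemma stretch_nonneg: "stretch n M x \<ge> 0" unfolding stretch_def by (rule dot_self_nonneg)

lemma prod_sqrt: "(\<Prod>k<(n::nat). sqrt (f k)) = sqrt (\<Prod>k<n. f k)"
  by (induction n) (auto simp: real_sqrt_mult)

lemma abs_prod_diag_le_prod_gelfand:
  assumes T: "\<forall>a\<in>l2. T a = (\<lambda>j. if j < n then mat_app n W a j else 0)"
    and tri: "\<And>i j. i < j \<Longrightarrow> j < n \<Longrightarrow> W i j = 0"
  shows "ennreal \<bar>\<Prod>k<n. W k k\<bar> \<le> (\<Prod>k<n. gelfand_gen l2_dual l2dist k T l2ball)"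
proof -
  have "(\<Prod>k<n. ennreal (sqrt (stretch n W (greedy_basis n W k)))) \<le> (\<Prod>k<n. gelfand_gen l2_dual l2dist k T l2ball)"
    by (rule prod_mono_ennreal) (use stretch_greedy_basis_le_gelfand[OF T] in auto)
  moreover have "(\<Prod>k<n. ennreal (sqrt (stretch n W (greedy_basis n W k)))) = ennreal (\<Prod>k<n. sqrt (stretch n W (greedy_basis n W k)))"
    by (rule prod_ennreal) (simp add: stretch_nonneg)
  moreover have "(\<Prod>k<n. sqrt (stretch n W (greedy_basis n W k))) = \<bar>\<Prod>k<n. W k k\<bar>"
    using prod_stretch_greedy_basis[of n W] tri by (simp add: prod_sqrt)
  ultimately show ?thesis by simp
qed

section \<open>Lower bound for Hilbert numbers\<close>

lemma abs_l2_coord_le_l2norm: assumes "f \<in> l2" shows "\<bar>f i\<bar> \<le> l2norm f"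
proof -
  have "(\<Sum>j\<in>{i}. (f j)\<^sup>2) \<le> (\<Sum>j. (f j)\<^sup>2)"
    using assms by (intro sum_le_suminf) (auto simp: l2_def)
  then have "(f i)\<^sup>2 \<le> (\<Sum>j. (f j)\<^sup>2)" by simp
  then have "sqrt ((f i)\<^sup>2) \<le> l2norm f" unfolding l2norm_def by (rule real_sqrt_le_mono)
  then show ?thesis by simp
qed

lemma gelfand_l2_le_hilbert_number:
  assumes "\<forall>y z a b. B (a *\<^sub>R y + b *\<^sub>R z) = (\<lambda>i. a * B y i + b * B z i)"
    "\<forall>y. B y \<in> l2 \<and> l2norm (B y) \<le> norm y"
    "l2_linear A" "\<exists>C. \<forall>f\<in>l2. norm (A f) \<le> C * l2norm f"
    "x \<in> F" "\<forall>f\<in>l2ball. A f + x \<in> F"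
  shows "gelfand_gen l2_dual l2dist k (B \<circ> S \<circ> A) l2ball \<le> hilbert_number S F k"
  unfolding hilbert_number_def
  by (rule SUP_upper2[where i="(B, A, x)"]) (use assms in auto)

lemma l2_synthesis_operator:
  fixes u :: "nat \<Rightarrow> 'a::real_normed_vector"
  shows "l2_linear (\<lambda>f. \<Sum>i<n. (\<alpha> * f i) *\<^sub>R u i)"
    and "\<exists>C. \<forall>f\<in>l2. norm (\<Sum>i<n. (\<alpha> * f i) *\<^sub>R u i) \<le> C * l2norm f"
proof -
  show "l2_linear (\<lambda>f. \<Sum>i<n. (\<alpha> * f i) *\<^sub>R u i)"
    unfolding l2_linear_def
    by (auto simp: scaleR_sum_right sum.distrib[symmetric] scaleR_add_left algebra_simps intro!: sum.cong)
  have "norm (\<Sum>i<n. (\<alpha> * f i) *\<^sub>R u i) \<le> (\<Sum>i<n. \<bar>\<alpha>\<bar> * norm (u i)) * l2norm f" if f: "f \<in> l2" for f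
  proof -
    have "norm (\<Sum>i<n. (\<alpha> * f i) *\<^sub>R u i) \<le> (\<Sum>i<n. \<bar>\<alpha>\<bar> * norm (u i) * \<bar>f i\<bar>)"
      by (rule order_trans[OF norm_sum]) (simp add: abs_mult mult_ac)
    also have "\<dots> \<le> (\<Sum>i<n. \<bar>\<alpha>\<bar> * norm (u i) * l2norm f)"
      using abs_l2_coord_le_l2norm[OF f] by (intro sum_mono mult_left_mono) auto
    finally show ?thesis by (simp add: sum_distrib_right)
  qed
  then show "\<exists>C. \<forall>f\<in>l2. norm (\<Sum>i<n. (\<alpha> * f i) *\<^sub>R u i) \<le> C * l2norm f" by blast
qed

lemma l2_analysis_operator:
  fixes \<psi> :: "nat \<Rightarrow> 'b::real_normed_vector \<Rightarrow> real"
  assumes psi: "\<And>j. j < n \<Longrightarrow> linear (\<psi> j)" and Bn: "\<And>y. (\<Sum>j<n. (\<beta> * \<psi> j y)\<^sup>2) \<le> (norm y)\<^sup>2"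
  defines "B \<equiv> \<lambda>y j. if j < n then \<beta> * \<psi> j y else 0"
  shows "\<forall>y z a b. B (a *\<^sub>R y + b *\<^sub>R z) = (\<lambda>i. a * B y i + b * B z i)"
    and "\<forall>y. B y \<in> l2 \<and> l2norm (B y) \<le> norm y"
proof -
  show "\<forall>y z a b. B (a *\<^sub>R y + b *\<^sub>R z) = (\<lambda>i. a * B y i + b * B z i)"
    using psi unfolding B_def by (auto simp: linear_add linear_scale algebra_simps)
  show "\<forall>y. B y \<in> l2 \<and> l2norm (B y) \<le> norm y"
  proof
    fix y
    have s: "\<forall>j\<ge>n. B y j = 0" by (simp add: B_def)
    have "l2norm (B y) = sqrt (dot n (B y) (B y))" by (rule l2norm_finite_support[OF s])
    also have "\<dots> = sqrt (\<Sum>j<n. (\<beta> * \<psi> j y)\<^sup>2)"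
      unfolding dot_def B_def by (simp add: power2_eq_square)
    also have "\<dots> \<le> sqrt ((norm y)\<^sup>2)" using Bn by (rule real_sqrt_le_mono)
    finally show "B y \<in> l2 \<and> l2norm (B y) \<le> norm y" using finite_support_in_l2[OF s] by simp
  qed
qed

text \<open>With \<open>A a = \<alpha> \<Sum> a\<^sub>i u\<^sub>i + x\<close> and \<open>B y = \<beta> (\<psi>\<^sub>j y)\<^sub>j\<close>, the operator \<open>BSA\<close> is the lower
  triangular matrix \<open>W\<^sub>j\<^sub>i = \<alpha>\<beta> \<psi>\<^sub>j (S u\<^sub>i)\<close>.\<close>

lemma prod_diag_le_prod_hilbert_number:
  fixes S :: "'a::real_normed_vector \<Rightarrow> 'b::real_normed_vector" and F :: "'a set"
    and u :: "nat \<Rightarrow> 'a" and \<psi> :: "nat \<Rightarrow> 'b \<Rightarrow> real"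
  assumes S: "bounded_linear S"
    and psi: "\<And>j. j < n \<Longrightarrow> linear (\<psi> j)"
    and Bn: "\<And>y. (\<Sum>j<n. (\<beta> * \<psi> j y)\<^sup>2) \<le> (norm y)\<^sup>2"
    and tri: "\<And>j i. j < i \<Longrightarrow> i < n \<Longrightarrow> \<psi> j (S (u i)) = 0"
    and diag: "\<And>k. k < n \<Longrightarrow> t k \<le> \<psi> k (S (u k))" "\<And>k. k < n \<Longrightarrow> 0 \<le> t k"
    and ab: "\<alpha> \<ge> 0" "\<beta> \<ge> 0"
    and x: "x \<in> F" and AF: "\<And>a. a \<in> l2ball \<Longrightarrow> (\<Sum>i<n. (\<alpha> * a i) *\<^sub>R u i) + x \<in> F"
  shows "ennreal (\<Prod>k<n. \<alpha> * \<beta> * t k) \<le> (\<Prod>k<n. hilbert_number S F k)"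
proof -
  define A where "A = (\<lambda>f::nat\<Rightarrow>real. (\<Sum>i<n. (\<alpha> * f i) *\<^sub>R u i))"
  define B where "B = (\<lambda>y j. if j < n then \<beta> * \<psi> j y else 0)"
  define W where "W = (\<lambda>j i. \<alpha> * \<beta> * \<psi> j (S (u i)))"
  have T: "\<forall>a\<in>l2. (B \<circ> S \<circ> A) a = (\<lambda>j. if j < n then mat_app n W a j else 0)"
  proof (intro ballI ext)
    fix a j
    have "\<psi> j (S (\<Sum>i<n. (\<alpha> * a i) *\<^sub>R u i)) = (\<Sum>i<n. (\<alpha> * a i) * \<psi> j (S (u i)))" if "j < n"
      using psi[OF that] bounded_linear.linear[OF S] by (simp add: linear_sum linear_scale)
    then show "(B \<circ> S \<circ> A) a j = (if j < n then mat_app n W a j else 0)"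
      by (simp add: A_def B_def mat_app_def W_def sum_distrib_left algebra_simps)
  qed
  have "(\<Prod>k<n. \<alpha> * \<beta> * t k) \<le> (\<Prod>k<n. W k k)"
    using diag ab by (intro prod_mono) (auto simp: W_def mult_left_mono)
  then have "ennreal (\<Prod>k<n. \<alpha> * \<beta> * t k) \<le> ennreal \<bar>\<Prod>k<n. W k k\<bar>"
    by (intro ennreal_leI) linarith
  also have "\<dots> \<le> (\<Prod>k<n. gelfand_gen l2_dual l2dist k (B \<circ> S \<circ> A) l2ball)"
    using tri by (intro abs_prod_diag_le_prod_gelfand[OF T]) (simp add: W_def)
  also have "\<dots> \<le> (\<Prod>k<n. hilbert_number S F k)"
    using l2_analysis_operator[OF psi Bn] l2_synthesis_operator[of \<alpha> u n] x AF
    by (intro prod_mono_ennreal gelfand_l2_le_hilbert_number) (auto simp: A_def B_def)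
  finally show ?thesis .
qed

section \<open>Greedy choice of pairs\<close>

text \<open>The \<open>k\<close>-th pair must not be separated by \<open>N (S u\<^sub>j) \<circ> S\<close> nor by \<open>E u\<^sub>j\<close> for \<open>j < k\<close>, but
  only the first \<open>m k\<close> of these functionals are imposed (those that a bound on
  \<open>c\<^bsub>m k\<^esub>\<close> can afford), so the \<open>E\<close>-constraints take effect only when \<open>2 k \<le> m k\<close>.\<close>

definition half_diff :: "('a::real_vector \<times> 'a) list \<Rightarrow> nat \<Rightarrow> 'a" where
  "half_diff ps j = (1/2) *\<^sub>R (fst (ps!j) - snd (ps!j))"

definition pair_functionals :: "('b \<Rightarrow> 'b \<Rightarrow> real) \<Rightarrow> ('a \<Rightarrow> 'a \<Rightarrow> real) \<Rightarrow> ('a::real_vector \<Rightarrow> 'b) \<Rightarrow> ('a \<times> 'a) list \<Rightarrow> nat \<Rightarrow> 'a \<Rightarrow> real" where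
  "pair_functionals N E S ps i = (if i < length ps then (\<lambda>x. N (S (half_diff ps i)) (S x))
     else if i < 2 * length ps then E (half_diff ps (i - length ps)) else (\<lambda>x. 0))"

definition good_pair :: "'a set \<Rightarrow> ('a::real_vector \<Rightarrow> 'b::metric_space) \<Rightarrow> (nat \<Rightarrow> nat) \<Rightarrow> (nat \<Rightarrow> real) \<Rightarrow> ('b \<Rightarrow> 'b \<Rightarrow> real) \<Rightarrow> ('a \<Rightarrow> 'a \<Rightarrow> real) \<Rightarrow> ('a \<times> 'a) list \<Rightarrow> ('a \<times> 'a) \<Rightarrow> bool" where
  "good_pair F S m t N E ps p \<longleftrightarrow> fst p \<in> F \<and> snd p \<in> F \<and>
     (\<forall>i<m (length ps). pair_functionals N E S ps i (fst p) = pair_functionals N E S ps i (snd p)) \<and>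
     t (length ps) < dist (S (fst p)) (S (snd p)) / 2"

fun pair_list :: "'a set \<Rightarrow> ('a::real_vector \<Rightarrow> 'b::metric_space) \<Rightarrow> (nat \<Rightarrow> nat) \<Rightarrow> (nat \<Rightarrow> real) \<Rightarrow> ('b \<Rightarrow> 'b \<Rightarrow> real) \<Rightarrow> ('a \<Rightarrow> 'a \<Rightarrow> real) \<Rightarrow> nat \<Rightarrow> ('a \<times> 'a) list" where
  "pair_list F S m t N E 0 = []"
| "pair_list F S m t N E (Suc k) = pair_list F S m t N E k @ [SOME p. good_pair F S m t N E (pair_list F S m t N E k) p]"

definition chosen_pair :: "'a set \<Rightarrow> ('a::real_vector \<Rightarrow> 'b::metric_space) \<Rightarrow> (nat \<Rightarrow> nat) \<Rightarrow> (nat \<Rightarrow> real) \<Rightarrow> ('b \<Rightarrow> 'b \<Rightarrow> real) \<Rightarrow> ('a \<Rightarrow> 'a \<Rightarrow> real) \<Rightarrow> nat \<Rightarrow> 'a \<times> 'a" where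
  "chosen_pair F S m t N E k = pair_list F S m t N E (Suc k) ! k"

lemma length_pair_list: "length (pair_list F S m t N E k) = k"
  by (induction k) auto

lemma nth_pair_list: "l < k \<Longrightarrow> pair_list F S m t N E k ! l = chosen_pair F S m t N E l"
proof (induction k)
  case 0 then show ?case by simp
next
  case (Suc k)
  show ?case
  proof (cases "l < k")
    case True then show ?thesis using Suc by (simp add: nth_append length_pair_list)
  next
    case False then have "l = k" using Suc by simp
    then show ?thesis by (simp add: chosen_pair_def)
  qed
qed

lemma chosen_pair_good:
  fixes S :: "'a::real_normed_vector \<Rightarrow> 'b::real_normed_vector"
  assumes S: "bounded_linear S" and N: "\<And>y. bounded_linear (N y)" and E: "\<And>v. bounded_linear (E v)"
    and g: "ennreal (t k) < gelfand_number S F (m k)" and t: "0 \<le> t k"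
  shows "good_pair F S m t N E (pair_list F S m t N E k) (chosen_pair F S m t N E k)"
proof -
  define ps where "ps = pair_list F S m t N E k"
  define L where "L = pair_functionals N E S ps"
  have Lb: "\<forall>i<m k. bounded_linear (L i)"
    unfolding L_def pair_functionals_def
    using bounded_linear_compose[OF N S] E bounded_linear_zero by auto
  have "ennreal (t k) < gelfand_number S F (m k)" by (rule g)
  also have "gelfand_number S F (m k) \<le> (SUP p \<in> {(f, g). f \<in> F \<and> g \<in> F \<and> (\<forall>i<m k. L i f = L i g)}.
          ennreal (dist (S (fst p)) (S (snd p)) / 2))"
    unfolding gelfand_number_def gelfand_gen_def by (rule INF_lower) (use Lb in auto)
  finally obtain p where p: "p \<in> {(f, g). f \<in> F \<and> g \<in> F \<and> (\<forall>i<m k. L i f = L i g)}"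
      "ennreal (t k) < ennreal (dist (S (fst p)) (S (snd p)) / 2)"
    by (auto simp: less_SUP_iff)
  have "good_pair F S m t N E ps p"
    using p t unfolding good_pair_def ps_def L_def length_pair_list by (auto simp: ennreal_less_iff)
  then have "\<exists>p. good_pair F S m t N E ps p" by blast
  then have "good_pair F S m t N E ps (SOME p. good_pair F S m t N E ps p)" by (rule someI_ex)
  then show ?thesis unfolding chosen_pair_def ps_def by (simp add: nth_append length_pair_list)
qed

definition chosen_half_diff :: "'a set \<Rightarrow> ('a::real_vector \<Rightarrow> 'b::metric_space) \<Rightarrow> (nat \<Rightarrow> nat) \<Rightarrow> (nat \<Rightarrow> real) \<Rightarrow> ('b \<Rightarrow> 'b \<Rightarrow> real) \<Rightarrow> ('a \<Rightarrow> 'a \<Rightarrow> real) \<Rightarrow> nat \<Rightarrow> 'a" where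
  "chosen_half_diff F S m t N E k = (1/2) *\<^sub>R (fst (chosen_pair F S m t N E k) - snd (chosen_pair F S m t N E k))"

lemma half_diff_pair_list: "j < k \<Longrightarrow> half_diff (pair_list F S m t N E k) j = chosen_half_diff F S m t N E j"
  by (simp add: half_diff_def chosen_half_diff_def nth_pair_list)

lemma chosen_pair_props:
  fixes S :: "'a::real_normed_vector \<Rightarrow> 'b::real_normed_vector"
  assumes S: "bounded_linear S" and N: "\<And>y. bounded_linear (N y)" and E: "\<And>v. bounded_linear (E v)"
    and g: "ennreal (t k) < gelfand_number S F (m k)" and t: "0 \<le> t k" and mk: "k \<le> m k"
  defines "u \<equiv> chosen_half_diff F S m t N E"
  shows "fst (chosen_pair F S m t N E k) \<in> F" "snd (chosen_pair F S m t N E k) \<in> F"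
    "u k = (1/2) *\<^sub>R (fst (chosen_pair F S m t N E k) - snd (chosen_pair F S m t N E k))"
    "t k < norm (S (u k))"
    "\<And>j. j < k \<Longrightarrow> N (S (u j)) (S (u k)) = 0"
    "\<And>j. j < k \<Longrightarrow> 2 * k \<le> m k \<Longrightarrow> E (u j) (u k) = 0"
proof -
  define p where "p = chosen_pair F S m t N E k"
  have G: "good_pair F S m t N E (pair_list F S m t N E k) p" unfolding p_def by (rule chosen_pair_good[where N=N and E=E and t=t and k=k and m=m and F=F, OF S N E g t])
  show "fst (chosen_pair F S m t N E k) \<in> F" "snd (chosen_pair F S m t N E k) \<in> F" using G by (auto simp: good_pair_def p_def)
  show uk: "u k = (1/2) *\<^sub>R (fst (chosen_pair F S m t N E k) - snd (chosen_pair F S m t N E k))" by (simp add: u_def chosen_half_diff_def)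
  have Su: "S (u k) = (1/2) *\<^sub>R (S (fst p) - S (snd p))"
    unfolding uk p_def using bounded_linear.linear[OF S] by (simp add: linear_scale linear_diff)
  have "t k < dist (S (fst p)) (S (snd p)) / 2" using G by (simp add: good_pair_def length_pair_list)
  then show "t k < norm (S (u k))" unfolding Su by (simp add: dist_norm)
  have eqs: "pair_functionals N E S (pair_list F S m t N E k) i (fst p) = pair_functionals N E S (pair_list F S m t N E k) i (snd p)" if "i < m k" for i
    using G that by (simp add: good_pair_def length_pair_list)
  show "N (S (u j)) (S (u k)) = 0" if j: "j < k" for j
  proof -
    have "N (S (u j)) (S (fst p)) = N (S (u j)) (S (snd p))"
      using eqs[of j] j mk by (simp add: pair_functionals_def length_pair_list half_diff_pair_list u_def)
    then show ?thesis unfolding Su using bounded_linear.linear[OF N[of "S (u j)"]]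
      by (simp add: linear_scale linear_diff)
  qed
  show "E (u j) (u k) = 0" if j: "j < k" and mk2: "2 * k \<le> m k" for j
  proof -
    have "E (u j) (fst p) = E (u j) (snd p)"
      using eqs[of "k + j"] j mk2 by (simp add: pair_functionals_def length_pair_list half_diff_pair_list u_def)
    then show ?thesis unfolding uk p_def[symmetric] using bounded_linear.linear[OF E[of "u j"]]
      by (simp add: linear_scale linear_diff)
  qed
qed

section \<open>Norming functionals\<close>

text \<open>Graphs of linear functionals on subspaces that are dominated by the norm; Hahn--Banach
  is obtained by Zorn's lemma on such graphs.\<close>

definition dominated_graph :: "('b::real_normed_vector \<times> real) set \<Rightarrow> bool" where
  "dominated_graph G \<longleftrightarrow> (\<forall>p\<in>G. \<forall>q\<in>G. \<forall>s t. (s *\<^sub>R fst p + t *\<^sub>R fst q, s * snd p + t * snd q) \<in> G) \<and>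
     (\<forall>p\<in>G. snd p \<le> norm (fst p))"

lemma dominated_graph_lincomb: "dominated_graph G \<Longrightarrow> (x,a) \<in> G \<Longrightarrow> (y,b) \<in> G \<Longrightarrow> (s *\<^sub>R x + t *\<^sub>R y, s * a + t * b) \<in> G"
  unfolding dominated_graph_def by (metis fst_conv snd_conv)

lemma dominated_graph_le_norm: "dominated_graph G \<Longrightarrow> (x,a) \<in> G \<Longrightarrow> a \<le> norm x"
  unfolding dominated_graph_def by (metis fst_conv snd_conv)

lemma dominated_graph_single_valued:
  assumes "dominated_graph G" "(x,a) \<in> G" "(x,b) \<in> G" shows "a = b"
proof -
  have "(1 *\<^sub>R x + (-1) *\<^sub>R x, 1 * a + (-1) * b) \<in> G" "(1 *\<^sub>R x + (-1) *\<^sub>R x, 1 * b + (-1) * a) \<in> G"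
    using dominated_graph_lincomb[OF assms(1)] assms(2,3) by blast+
  then have "a - b \<le> 0" "b - a \<le> 0" using dominated_graph_le_norm[OF assms(1)] by fastforce+
  then show ?thesis by simp
qed

lemma dominated_graph_extend_by:
  fixes M :: "('b::real_normed_vector \<times> real) set"
  assumes M: "dominated_graph M"
    and lower: "\<And>x a. (x, a) \<in> M \<Longrightarrow> a - norm (x - w) \<le> c"
    and upper: "\<And>y b. (y, b) \<in> M \<Longrightarrow> c \<le> norm (y + w) - b"
  shows "dominated_graph {(x + t *\<^sub>R w, a + t * c) | x a t. (x, a) \<in> M}"
  unfolding dominated_graph_def
proof (intro conjI ballI allI)
  fix p q s r
  assume "p \<in> {(x + t *\<^sub>R w, a + t * c) | x a t. (x, a) \<in> M}" "q \<in> {(x + t *\<^sub>R w, a + t * c) | x a t. (x, a) \<in> M}"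
  then obtain x a t y b u where p: "p = (x + t *\<^sub>R w, a + t * c)" "(x, a) \<in> M"
    and q: "q = (y + u *\<^sub>R w, b + u * c)" "(y, b) \<in> M" by blast
  have "(s *\<^sub>R x + r *\<^sub>R y, s * a + r * b) \<in> M" by (rule dominated_graph_lincomb[OF M p(2) q(2)])
  moreover have "s *\<^sub>R fst p + r *\<^sub>R fst q = (s *\<^sub>R x + r *\<^sub>R y) + (s * t + r * u) *\<^sub>R w"
    and "s * snd p + r * snd q = (s * a + r * b) + (s * t + r * u) * c"
    using p q by (simp_all add: algebra_simps)
  ultimately show "(s *\<^sub>R fst p + r *\<^sub>R fst q, s * snd p + r * snd q) \<in> {(x + t *\<^sub>R w, a + t * c) | x a t. (x, a) \<in> M}"
    by force
next
  fix p assume "p \<in> {(x + t *\<^sub>R w, a + t * c) | x a t. (x, a) \<in> M}"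
  then obtain x a t where p: "p = (x + t *\<^sub>R w, a + t * c)" and xa: "(x, a) \<in> M" by blast
  have scaled: "((1/s) *\<^sub>R x, (1/s) * a) \<in> M" for s
    using dominated_graph_lincomb[OF M xa xa, of "1/s" 0] by simp
  have "a + t * c \<le> norm (x + t *\<^sub>R w)"
  proof (cases t "0::real" rule: linorder_cases)
    case equal then show ?thesis using dominated_graph_le_norm[OF M xa] by simp
  next
    case greater
    have "t * c \<le> t * (norm ((1/t) *\<^sub>R x + w) - (1/t) * a)"
      using upper[OF scaled[of t]] greater by (simp add: mult_left_mono)
    also have "\<dots> = norm (t *\<^sub>R ((1/t) *\<^sub>R x + w)) - a" using greater by (simp add: right_diff_distrib)
    also have "t *\<^sub>R ((1/t) *\<^sub>R x + w) = x + t *\<^sub>R w" using greater by (simp add: algebra_simps)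
    finally show ?thesis by simp
  next
    case less
    have "(-t) * ((1/(-t)) * a - norm ((1/(-t)) *\<^sub>R x - w)) \<le> (-t) * c"
      using lower[OF scaled[of "-t"]] less by (simp add: mult_left_mono)
    also have "(-t) * ((1/(-t)) * a - norm ((1/(-t)) *\<^sub>R x - w)) = a - norm ((-t) *\<^sub>R ((1/(-t)) *\<^sub>R x - w))"
      using less by (simp add: right_diff_distrib)
    also have "(-t) *\<^sub>R ((1/(-t)) *\<^sub>R x - w) = x + t *\<^sub>R w" using less by (simp add: algebra_simps)
    finally show ?thesis by (simp add: algebra_simps)
  qed
  then show "snd p \<le> norm (fst p)" using p by simp
qed

text \<open>The one-step extension of Hahn--Banach: the value \<open>c\<close> at \<open>w\<close> is squeezed between
  \<open>sup (a - \<parallel>x - w\<parallel>)\<close> and \<open>inf (\<parallel>y + w\<parallel> - b)\<close>, which are in the right order by the triangle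
  inequality.\<close>

lemma dominated_graph_extend:
  fixes M :: "('b::real_normed_vector \<times> real) set"
  assumes M: "dominated_graph M" and z: "(0, 0) \<in> M" and w: "\<forall>a. (w, a) \<notin> M"
  shows "\<exists>M'. dominated_graph M' \<and> M \<subseteq> M' \<and> M' \<noteq> M"
proof -
  define D where "D = {a - norm (x - w) | x a. (x, a) \<in> M}"
  have ub: "d \<le> norm (y + w) - b" if dD: "d \<in> D" and yb: "(y, b) \<in> M" for d y b
  proof -
    obtain x a where xa: "d = a - norm (x - w)" "(x, a) \<in> M" using dD unfolding D_def by blast
    have "(1 *\<^sub>R x + 1 *\<^sub>R y, 1 * a + 1 * b) \<in> M" by (rule dominated_graph_lincomb[OF M xa(2) yb])
    then have "a + b \<le> norm (x + y)" using dominated_graph_le_norm[OF M] by fastforce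
    also have "\<dots> \<le> norm (x - w) + norm (y + w)" using norm_triangle_ineq[of "x - w" "y + w"] by simp
    finally show ?thesis using xa by simp
  qed
  have Dne: "D \<noteq> {}" using z by (auto simp: D_def)
  have bdd: "bdd_above D" using ub z unfolding bdd_above_def by fastforce
  define M' where "M' = {(x + t *\<^sub>R w, a + t * Sup D) | x a t. (x, a) \<in> M}"
  have "dominated_graph M'" unfolding M'_def
  proof (rule dominated_graph_extend_by[OF M])
    show "a - norm (x - w) \<le> Sup D" if "(x, a) \<in> M" for x a
      by (rule cSup_upper[OF _ bdd]) (use that in \<open>auto simp: D_def\<close>)
    show "Sup D \<le> norm (y + w) - b" if "(y, b) \<in> M" for y b
      by (rule cSup_least[OF Dne]) (use ub that in auto)
  qed
  moreover have "M \<subseteq> M'" unfolding M'_def by (force intro: exI[of _ 0])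
  moreover have "(w, Sup D) \<in> M'" unfolding M'_def using z by (intro CollectI exI[of _ 0] exI[of _ 0] exI[of _ 1]) auto
  then have "M' \<noteq> M" using w by auto
  ultimately show ?thesis by blast
qed

lemma dominated_graph_Union_chain:
  assumes "\<And>G. G \<in> C \<Longrightarrow> dominated_graph G" and ch: "\<And>X Y. X \<in> C \<Longrightarrow> Y \<in> C \<Longrightarrow> X \<subseteq> Y \<or> Y \<subseteq> X"
  shows "dominated_graph (\<Union>C)"
  unfolding dominated_graph_def
proof (intro conjI ballI allI)
  fix p q s t assume "p \<in> \<Union>C" "q \<in> \<Union>C"
  then obtain Z where Z: "Z \<in> C" "p \<in> Z" "q \<in> Z" using ch by blast
  then have "(s *\<^sub>R fst p + t *\<^sub>R fst q, s * snd p + t * snd q) \<in> Z"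
    using assms(1) unfolding dominated_graph_def by blast
  then show "(s *\<^sub>R fst p + t *\<^sub>R fst q, s * snd p + t * snd q) \<in> \<Union>C" using Z by auto
next
  fix p assume "p \<in> \<Union>C"
  then show "snd p \<le> norm (fst p)" using assms(1) unfolding dominated_graph_def by blast
qed

lemma maximal_dominated_graph_exists:
  assumes "dominated_graph G0"
  obtains M where "dominated_graph M" "G0 \<subseteq> M" "\<And>M'. dominated_graph M' \<Longrightarrow> M \<subseteq> M' \<Longrightarrow> M' = M"
proof -
  define A where "A = {G. dominated_graph G \<and> G0 \<subseteq> G}"
  have "\<exists>M\<in>A. \<forall>X\<in>A. M \<subseteq> X \<longrightarrow> X = M"
  proof (rule Zorn_Lemma2, intro ballI)
    fix C assume C: "C \<in> chains A"
    show "\<exists>U\<in>A. \<forall>X\<in>C. X \<subseteq> U"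
    proof (cases "C = {}")
      case True then show ?thesis using assms by (auto simp: A_def)
    next
      case False
      have CA: "C \<subseteq> A" and ch: "\<And>X Y. X \<in> C \<Longrightarrow> Y \<in> C \<Longrightarrow> X \<subseteq> Y \<or> Y \<subseteq> X"
        using C by (auto simp: chains_def chain_subset_def)
      then have "dominated_graph (\<Union>C)" by (intro dominated_graph_Union_chain) (auto simp: A_def)
      moreover have "G0 \<subseteq> \<Union>C" using False CA by (auto simp: A_def)
      ultimately show ?thesis by (auto simp: A_def)
    qed
  qed
  then obtain M where "M \<in> A" "\<forall>X\<in>A. M \<subseteq> X \<longrightarrow> X = M" by blast
  then show ?thesis by (intro that) (auto simp: A_def)
qed

lemma total_dominated_graph_functional:
  assumes M: "dominated_graph M" and tot: "\<And>z. \<exists>a. (z, a) \<in> M"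
  obtains \<psi> where "bounded_linear \<psi>" "\<And>z. \<bar>\<psi> z\<bar> \<le> norm z" "\<And>z a. (z, a) \<in> M \<Longrightarrow> \<psi> z = a"
proof -
  define \<psi> where "\<psi> = (\<lambda>z. THE a. (z, a) \<in> M)"
  have psi: "(z, \<psi> z) \<in> M" for z
    unfolding \<psi>_def using tot dominated_graph_single_valued[OF M] by (metis theI)
  have psi_eq: "(z, a) \<in> M \<Longrightarrow> \<psi> z = a" for z a using dominated_graph_single_valued[OF M psi] by blast
  have lin: "\<psi> (s *\<^sub>R x + t *\<^sub>R y) = s * \<psi> x + t * \<psi> y" for s t x y
    by (rule psi_eq, rule dominated_graph_lincomb[OF M psi psi])
  have dom: "\<bar>\<psi> z\<bar> \<le> norm z" for z
    using dominated_graph_le_norm[OF M psi[of z]] dominated_graph_le_norm[OF M psi[of "-z"]] lin[of "-1" z 0 z]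
    by simp
  have "bounded_linear \<psi>"
  proof (rule bounded_linear_intro[where K=1])
    show "\<psi> (x + y) = \<psi> x + \<psi> y" for x y using lin[of 1 x 1 y] by simp
    show "\<psi> (r *\<^sub>R x) = r *\<^sub>R \<psi> x" for r x using lin[of r x 0 x] by simp
    show "norm (\<psi> x) \<le> norm x * 1" for x using dom[of x] by simp
  qed
  then show ?thesis using that dom psi_eq by blast
qed

lemma norming_functional:
  fixes y0 :: "'b::real_normed_vector"
  shows "\<exists>\<psi>. bounded_linear \<psi> \<and> (\<forall>z. \<bar>\<psi> z\<bar> \<le> norm z) \<and> \<psi> y0 = norm y0"
proof -
  define G0 where "G0 = {(t *\<^sub>R y0, t * norm y0) | t. True}"
  have "dominated_graph G0"
    unfolding dominated_graph_def G0_def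
    by (auto simp: algebra_simps mult_right_mono intro: exI[of _ "_ * _ + _ * _"])
  then obtain M where M: "dominated_graph M" "G0 \<subseteq> M"
    and max: "\<And>M'. dominated_graph M' \<Longrightarrow> M \<subseteq> M' \<Longrightarrow> M' = M"
    by (rule maximal_dominated_graph_exists) blast
  have "(0, 0) \<in> M" using M(2) by (auto simp: G0_def intro!: exI[of _ 0])
  then have "\<exists>a. (z, a) \<in> M" for z using dominated_graph_extend[OF M(1)] max by metis
  then obtain \<psi> where "bounded_linear \<psi>" "\<And>z. \<bar>\<psi> z\<bar> \<le> norm z" "\<And>z a. (z, a) \<in> M \<Longrightarrow> \<psi> z = a"
    using total_dominated_graph_functional[OF M(1)] by blast
  moreover have "(y0, norm y0) \<in> M" using M(2) by (auto simp: G0_def intro!: exI[of _ 1])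
  ultimately show ?thesis by blast
qed

definition norming_fun :: "'b::real_normed_vector \<Rightarrow> 'b \<Rightarrow> real" where
  "norming_fun y = (SOME \<psi>. bounded_linear \<psi> \<and> (\<forall>z. \<bar>\<psi> z\<bar> \<le> norm z) \<and> \<psi> y = norm y)"

lemma
  shows bounded_linear_norming_fun: "bounded_linear (norming_fun y)"
    and abs_norming_fun_le: "\<bar>norming_fun y z\<bar> \<le> norm z"
    and norming_fun_self: "norming_fun y y = norm y"
proof -
  have "bounded_linear (norming_fun y) \<and> (\<forall>z. \<bar>norming_fun y z\<bar> \<le> norm z) \<and> norming_fun y y = norm y"
    unfolding norming_fun_def by (rule someI_ex[OF norming_functional])
  then show "bounded_linear (norming_fun y)" "\<bar>norming_fun y z\<bar> \<le> norm z" "norming_fun y y = norm y" by auto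
qed

lemma sum_sq_norming_fun_le:
  fixes n :: nat
  assumes n: "n \<ge> 1"
  shows "(\<Sum>j<n. ((1 / sqrt n) * norming_fun (v j) y)\<^sup>2) \<le> (norm y)\<^sup>2"
proof -
  have "(\<Sum>j<n. ((1 / sqrt n) * norming_fun (v j) y)\<^sup>2) \<le> (\<Sum>j<n. (1 / real n) * (norm y)\<^sup>2)"
  proof (rule sum_mono)
    fix j
    have "(norming_fun (v j) y)\<^sup>2 \<le> (norm y)\<^sup>2" using abs_norming_fun_le[of "v j" y] abs_le_square_iff[of "norming_fun (v j) y" "norm y"] by simp
    then show "((1 / sqrt n) * norming_fun (v j) y)\<^sup>2 \<le> (1 / real n) * (norm y)\<^sup>2"
      using n by (simp add: power_mult_distrib power_divide divide_right_mono)
  qed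
  also have "\<dots> = (norm y)\<^sup>2" using n by simp
  finally show ?thesis .
qed

section \<open>Inner products\<close>

definition inner_product_for :: "('a::real_normed_vector \<Rightarrow> 'a \<Rightarrow> real) \<Rightarrow> bool" where
  "inner_product_for ip \<longleftrightarrow> (\<forall>x y. ip x y = ip y x) \<and>
      (\<forall>x y z a b. ip (a *\<^sub>R x + b *\<^sub>R y) z = a * ip x z + b * ip y z) \<and>
      (\<forall>x. ip x x = (norm x)\<^sup>2)"

lemma hilbert_space_inner_product: "hilbert_space TYPE('a::real_normed_vector) \<Longrightarrow> \<exists>ip::'a\<Rightarrow>'a\<Rightarrow>real. inner_product_for ip"
  unfolding hilbert_space_def inner_product_for_def by blast

context
  fixes ip :: "'a::real_normed_vector \<Rightarrow> 'a \<Rightarrow> real"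
  assumes ip: "inner_product_for ip"
begin

lemma ip_sym: "ip x y = ip y x" using ip unfolding inner_product_for_def by blast
lemma ip_lin: "ip (a *\<^sub>R x + b *\<^sub>R y) z = a * ip x z + b * ip y z" using ip unfolding inner_product_for_def by blast
lemma ip_norm: "ip x x = (norm x)\<^sup>2" using ip unfolding inner_product_for_def by blast

lemma ip_zero: "ip 0 z = 0" using ip_lin[of 0 z 0 z z] by simp
lemma ip_add: "ip (x + y) z = ip x z + ip y z" using ip_lin[of 1 x 1 y z] by simp
lemma ip_scale: "ip (a *\<^sub>R x) z = a * ip x z" using ip_lin[of a x 0 x z] by simp
lemma ip_diff: "ip (x - y) z = ip x z - ip y z" using ip_lin[of 1 x "-1" y z] by simp
lemma ip_scale_r: "ip z (a *\<^sub>R x) = a * ip z x" using ip_scale ip_sym by metis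
lemma ip_diff_r: "ip z (x - y) = ip z x - ip z y" using ip_diff ip_sym by metis

lemma ip_sum: "finite I \<Longrightarrow> ip (\<Sum>i\<in>I. a i *\<^sub>R u i) z = (\<Sum>i\<in>I. a i * ip (u i) z)"
  by (induction I rule: finite_induct) (auto simp: ip_zero ip_add ip_scale)

lemma ip_sum_r: "finite I \<Longrightarrow> ip z (\<Sum>i\<in>I. a i *\<^sub>R u i) = (\<Sum>i\<in>I. a i * ip z (u i))"
  using ip_sum[of I a u z] ip_sym by (metis (no_types, lifting) sum.cong)

lemma ip_sum_sum: "finite I \<Longrightarrow> ip (\<Sum>i\<in>I. a i *\<^sub>R u i) (\<Sum>i\<in>I. b i *\<^sub>R u i) = (\<Sum>i\<in>I. \<Sum>j\<in>I. a i * b j * ip (u i) (u j))"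
proof -
  assume f: "finite I"
  have "ip (\<Sum>i\<in>I. a i *\<^sub>R u i) (\<Sum>i\<in>I. b i *\<^sub>R u i) = (\<Sum>i\<in>I. a i * ip (u i) (\<Sum>j\<in>I. b j *\<^sub>R u j))"
    by (rule ip_sum[OF f])
  also have "\<dots> = (\<Sum>i\<in>I. a i * (\<Sum>j\<in>I. b j * ip (u i) (u j)))" using ip_sum_r[OF f] by simp
  also have "\<dots> = (\<Sum>i\<in>I. \<Sum>j\<in>I. a i * b j * ip (u i) (u j))" by (simp add: sum_distrib_left mult.assoc)
  finally show ?thesis .
qed

lemma norm_sum_orthogonal_sq:
  assumes "finite I" "\<And>i j. i \<in> I \<Longrightarrow> j \<in> I \<Longrightarrow> i \<noteq> j \<Longrightarrow> ip (u i) (u j) = 0"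
  shows "(norm (\<Sum>i\<in>I. a i *\<^sub>R u i))\<^sup>2 = (\<Sum>i\<in>I. (a i)\<^sup>2 * (norm (u i))\<^sup>2)"
proof -
  have "(norm (\<Sum>i\<in>I. a i *\<^sub>R u i))\<^sup>2 = (\<Sum>i\<in>I. \<Sum>j\<in>I. a i * a j * ip (u i) (u j))"
    using ip_norm[symmetric] ip_sum_sum[OF assms(1)] by simp
  also have "\<dots> = (\<Sum>i\<in>I. \<Sum>j\<in>I. if j = i then a i * a i * ip (u i) (u i) else 0)"
    using assms(2) by (intro sum.cong) auto
  also have "\<dots> = (\<Sum>i\<in>I. (a i)\<^sup>2 * (norm (u i))\<^sup>2)" using assms(1) by (simp add: ip_norm power2_eq_square)
  finally show ?thesis .
qed

lemma bessel_inequality: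
  assumes "finite I" "\<And>i j. i \<in> I \<Longrightarrow> j \<in> I \<Longrightarrow> ip (w i) (w j) = (if i = j then 1 else 0)"
  shows "(\<Sum>i\<in>I. (ip y (w i))\<^sup>2) \<le> (norm y)\<^sup>2"
proof -
  define v where "v = (\<Sum>i\<in>I. ip y (w i) *\<^sub>R w i)"
  have vv: "ip v v = (\<Sum>i\<in>I. (ip y (w i))\<^sup>2)"
  proof -
    have "ip v v = (\<Sum>i\<in>I. \<Sum>j\<in>I. if j = i then ip y (w i) * ip y (w i) else 0)"
      unfolding v_def ip_sum_sum[OF assms(1)] using assms(2) by (intro sum.cong) auto
    then show ?thesis using assms(1) by (simp add: power2_eq_square)
  qed
  have yv: "ip y v = (\<Sum>i\<in>I. (ip y (w i))\<^sup>2)"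
    unfolding v_def ip_sum_r[OF assms(1)] by (simp add: power2_eq_square)
  have "0 \<le> ip (y - v) (y - v)" using ip_norm by simp
  also have "\<dots> = ip y y - 2 * ip y v + ip v v" by (simp add: ip_diff ip_diff_r ip_sym[of v y])
  finally show ?thesis using vv yv ip_norm[of y] by simp
qed

lemma ip_cauchy_schwarz: "\<bar>ip y w\<bar> \<le> norm y * norm w"
proof (cases "w = 0")
  case True then show ?thesis using ip_zero ip_sym[of y 0] by simp
next
  case False
  define e where "e = (1 / norm w) *\<^sub>R w"
  have "ip e e = 1" using False by (simp add: e_def ip_norm)
  then have "(\<Sum>i\<in>{0::nat}. (ip y e)\<^sup>2) \<le> (norm y)\<^sup>2" by (intro bessel_inequality) auto
  then have "(ip y e)\<^sup>2 \<le> (norm y)\<^sup>2" by simp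
  then have "\<bar>ip y e\<bar> \<le> \<bar>norm y\<bar>" by (simp only: abs_le_square_iff)
  then have "\<bar>ip y e\<bar> \<le> norm y" by simp
  moreover have "ip y w = norm w * ip y e" using False by (simp add: e_def ip_scale_r)
  ultimately show ?thesis using False by (simp add: abs_mult mult.commute mult_right_mono)
qed

lemma ip_bounded_linear: "bounded_linear (\<lambda>x. ip x u)"
proof (rule bounded_linear_intro[where K="norm u"])
  show "ip (x + y) u = ip x u + ip y u" for x y by (rule ip_add)
  show "ip (r *\<^sub>R x) u = r *\<^sub>R ip x u" for r x by (simp add: ip_scale)
  show "norm (ip x u) \<le> norm x * norm u" for x using ip_cauchy_schwarz by simp
qed

end

definition normalized_inner :: "('b \<Rightarrow> 'b \<Rightarrow> real) \<Rightarrow> 'b::real_normed_vector \<Rightarrow> 'b \<Rightarrow> real" where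
  "normalized_inner ip y = (\<lambda>z. ip z y / norm y)"

lemma
  assumes ip: "inner_product_for ip"
  shows bounded_linear_normalized_inner: "bounded_linear (normalized_inner ip y)"
    and normalized_inner_self: "normalized_inner ip y y = norm y"
proof -
  show "bounded_linear (normalized_inner ip y)" unfolding normalized_inner_def
    using bounded_linear_compose[OF bounded_linear_divide[of "norm y"] ip_bounded_linear[OF ip, of y]] by simp
  show "normalized_inner ip y y = norm y" unfolding normalized_inner_def using ip_norm[OF ip, of y] by (simp add: power2_eq_square)
qed

lemma sum_sq_normalized_inner_le:
  fixes ip :: "'b::real_normed_vector \<Rightarrow> 'b \<Rightarrow> real" and w :: "nat \<Rightarrow> 'b" and n :: nat
  assumes ip: "inner_product_for ip" and tri: "\<And>j i. j < i \<Longrightarrow> i < n \<Longrightarrow> normalized_inner ip (w j) (w i) = 0"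
    and pos: "\<And>k. k < n \<Longrightarrow> norm (w k) > 0"
  shows "(\<Sum>j<n. (1 * normalized_inner ip (w j) y)\<^sup>2) \<le> (norm y)\<^sup>2"
proof -
  define e where "e = (\<lambda>j. (1 / norm (w j)) *\<^sub>R w j)"
  have Ne: "normalized_inner ip (w j) y = ip y (e j)" for j unfolding normalized_inner_def e_def by (simp add: ip_scale_r[OF ip])
  have o: "ip (w i) (w j) = 0" if "i < n" "j < n" "i \<noteq> j" for i j
  proof (cases "j < i")
    case True
    then have "ip (w i) (w j) / norm (w j) = 0" using tri[OF True that(1)] by (simp add: normalized_inner_def)
    then show ?thesis using pos[OF that(2)] by simp
  next
    case False
    have "i < j" using False that(3) by linarith
    then have "ip (w j) (w i) / norm (w i) = 0" using tri[OF _ that(2)] by (simp add: normalized_inner_def)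
    then show ?thesis using pos[OF that(1)] ip_sym[OF ip] by simp
  qed
  have on: "ip (e i) (e j) = (if i = j then 1 else 0)" if "i \<in> {..<n}" "j \<in> {..<n}" for i j
  proof (cases "i = j")
    case True
    then show ?thesis using pos[of i] that by (simp add: e_def ip_scale[OF ip] ip_scale_r[OF ip] ip_norm[OF ip] power2_eq_square)
  next
    case False
    then show ?thesis using o[of i j] that by (simp add: e_def ip_scale[OF ip] ip_scale_r[OF ip])
  qed
  have "(\<Sum>j\<in>{..<n}. (ip y (e j))\<^sup>2) \<le> (norm y)\<^sup>2" by (rule bessel_inequality[OF ip]) (use on in auto)
  then show ?thesis by (simp add: Ne)
qed

section \<open>Products and roots in \<open>[0,\<infinity>]\<close>\<close>

lemma ennreal_mult_le_approx:
  fixes c X R :: ennreal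
  assumes H: "\<And>s. 0 < s \<Longrightarrow> ennreal s < c \<Longrightarrow> ennreal s * X \<le> R"
  shows "c * X \<le> R"
proof -
  have "c \<le> (SUP s\<in>{s. 0 < s \<and> ennreal s < c}. ennreal s)"
  proof (rule dense_le)
    fix y assume "y < c"
    then obtain z where z: "y < z" "z < c" using dense by blast
    moreover have "0 < z" using z(1) by (simp add: le_less_trans[OF zero_le])
    ultimately obtain s where "z = ennreal s" "0 < s"
      by (cases z) (auto simp: top_unique)
    then show "y \<le> (SUP s\<in>{s. 0 < s \<and> ennreal s < c}. ennreal s)"
      using z by (intro SUP_upper2[of s]) auto
  qed
  then have "c * X \<le> (SUP s\<in>{s. 0 < s \<and> ennreal s < c}. ennreal s) * X"
    by (rule mult_right_mono) simp
  also have "\<dots> = (SUP s\<in>{s. 0 < s \<and> ennreal s < c}. ennreal s * X)"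
    by (rule SUP_mult_right_ennreal)
  also have "\<dots> \<le> R" using H by (auto intro: SUP_least)
  finally show ?thesis .
qed

lemma prod_ennreal_mult_le_approx:
  fixes c :: "nat \<Rightarrow> ennreal" and R :: ennreal
  shows "(\<And>t. (\<And>k. k < n \<Longrightarrow> 0 < t k \<and> ennreal (t k) < c k) \<Longrightarrow> ennreal (\<Prod>k<n. t k) * d \<le> R)
         \<Longrightarrow> (\<Prod>k<n. c k) * d \<le> R"
proof (induction n arbitrary: d)
  case 0
  then show ?case using "0.prems"[of "\<lambda>_. 1"] by simp
next
  case (Suc n)
  have "c n * ((\<Prod>k<n. c k) * d) \<le> R"
  proof (rule ennreal_mult_le_approx)
    fix s :: real assume s: "0 < s" "ennreal s < c n"
    have "(\<Prod>k<n. c k) * (ennreal s * d) \<le> R"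
    proof (rule Suc.IH)
      fix t assume t: "\<And>k. k < n \<Longrightarrow> 0 < t k \<and> ennreal (t k) < c k"
      define t' where "t' = t(n := s)"
      have "ennreal (\<Prod>k<Suc n. t' k) * d \<le> R"
        by (rule Suc.prems) (use t s in \<open>auto simp: t'_def less_Suc_eq\<close>)
      moreover have "(\<Prod>k<Suc n. t' k) = (\<Prod>k<n. t k) * s" by (simp add: t'_def)
      moreover have "(\<Prod>k<n. t k) \<ge> 0" using t by (intro prod_nonneg) (auto intro: less_imp_le)
      ultimately show "ennreal (\<Prod>k<n. t k) * (ennreal s * d) \<le> R"
        using s by (simp add: ennreal_mult mult.assoc)
    qed
    then show "ennreal s * ((\<Prod>k<n. c k) * d) \<le> R" by (simp add: mult_ac)
  qed
  then show ?case by (simp add: mult_ac)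
qed

lemma enn_root_mono: "n \<ge> 1 \<Longrightarrow> x \<le> y \<Longrightarrow> enn_root n x \<le> enn_root n y"
proof -
  assume n: "n \<ge> 1" and xy: "x \<le> y"
  show ?thesis
  proof (cases "y = (Orderings.top::ennreal)")
    case True then show ?thesis by (simp add: enn_root_def)
  next
    case False
    then have xf: "x \<noteq> (Orderings.top::ennreal)" using xy top_unique by auto
    have "enn2real x \<le> enn2real y" using xy False by (intro enn2real_mono) (auto simp: less_top)
    then have "root n (enn2real x) \<le> root n (enn2real y)" using n by (simp add: real_root_le_iff)
    then show ?thesis using False xf by (simp add: enn_root_def ennreal_leI)
  qed
qed

lemma enn_root_mult: assumes n: "n \<ge> 1" and C: "C > 0"
  shows "enn_root n (ennreal (C^n) * P) = ennreal C * enn_root n P"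
proof (cases P)
  case top
  have "ennreal (C^n) * (Orderings.top::ennreal) = Orderings.top" using C by (simp add: ennreal_mult_top)
  then show ?thesis using top C by (simp add: enn_root_def ennreal_mult_top)
next
  case (real p)
  have e: "ennreal (C^n) * P = ennreal (C^n * p)" using real C by (simp add: ennreal_mult)
  have "root n (C^n * p) = C * root n p"
    using n C by (simp add: real_root_mult real_root_pos2[of n C] less_imp_le)
  moreover have "enn_root n (ennreal (C^n * p)) = ennreal (root n (C^n * p))"
    using real C by (simp add: enn_root_def)
  moreover have "ennreal C * enn_root n P = ennreal (C * root n p)"
    using real C ennreal_mult[of C "root n p"] real_root_ge_zero[of p n] by (simp add: enn_root_def)
  ultimately show ?thesis unfolding e by simp
qed

lemma enn_root_pow: assumes n: "n \<ge> 1" shows "enn_root n (x ^ n) = x"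
proof (cases x)
  case top
  then show ?thesis using n by (simp add: enn_root_def power_eq_top_ennreal)
next
  case (real r)
  then have "x ^ n = ennreal (r ^ n)" by (simp add: ennreal_power)
  moreover have "root n (r ^ n) = r" using real n by (intro real_root_pos2) auto
  ultimately show ?thesis using real by (simp add: enn_root_def)
qed

lemma le_enn_root_prod:
  fixes c :: "nat \<Rightarrow> ennreal"
  assumes n: "n \<ge> 1" and mono: "\<And>k. k < n \<Longrightarrow> a \<le> c k"
  shows "a \<le> enn_root n (\<Prod>k<n. c k)"
proof -
  have "a = enn_root n (a ^ n)" using enn_root_pow[OF n] by simp
  also have "\<dots> \<le> enn_root n (\<Prod>k<n. c k)"
    using mono prod_mono_ennreal[of "{..<n}" "\<lambda>_. a" c] by (intro enn_root_mono[OF n]) auto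
  finally show ?thesis .
qed

lemma enn_root_prod_le_by_approx:
  fixes c h :: "nat \<Rightarrow> ennreal"
  assumes H: "\<And>t. (\<And>k. k < n \<Longrightarrow> 0 < t k \<and> ennreal (t k) < c k) \<Longrightarrow> ennreal (\<Prod>k<n. K * t k) \<le> (\<Prod>k<n. h k)"
    and K: "K > 0" and n: "n \<ge> 1"
  shows "enn_root n (\<Prod>k<n. c k) \<le> ennreal (1 / K) * enn_root n (\<Prod>k<n. h k)"
proof -
  have "(\<Prod>k<n. c k) * 1 \<le> ennreal ((1/K)^n) * (\<Prod>k<n. h k)"
  proof (rule prod_ennreal_mult_le_approx)
    fix t assume t: "\<And>k. k < n \<Longrightarrow> 0 < t k \<and> ennreal (t k) < c k"
    have "(\<Prod>k<n. t k) = (1/K)^n * (\<Prod>k<n. K * t k)" using K by (simp add: prod.distrib power_mult_distrib[symmetric])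
    moreover have "(\<Prod>k<n. K * t k) \<ge> 0" using K t by (intro prod_nonneg) (auto intro: less_imp_le)
    ultimately have "ennreal (\<Prod>k<n. t k) = ennreal ((1/K)^n) * ennreal (\<Prod>k<n. K * t k)"
      using K by (simp add: ennreal_mult)
    also have "\<dots> \<le> ennreal ((1/K)^n) * (\<Prod>k<n. h k)" by (intro mult_left_mono H t) auto
    finally show "ennreal (\<Prod>k<n. t k) * 1 \<le> ennreal ((1/K)^n) * (\<Prod>k<n. h k)" by simp
  qed
  then have "enn_root n (\<Prod>k<n. c k) \<le> enn_root n (ennreal ((1/K)^n) * (\<Prod>k<n. h k))"
    using n by (intro enn_root_mono) auto
  also have "\<dots> = ennreal (1/K) * enn_root n (\<Prod>k<n. h k)"
    using enn_root_mult[OF n, of "1/K"] K by simp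
  finally show ?thesis .
qed

section \<open>Embedding the unit ball of \<open>\<ell>\<^sub>2\<close>\<close>

lemma l2ball_sum_sq_le_1: assumes "a \<in> l2ball" shows "(\<Sum>i<n. (a i)\<^sup>2) \<le> 1"
proof -
  have a: "a \<in> l2" "l2norm a \<le> 1" using assms by (auto simp: l2ball_def)
  have "(\<Sum>i<n. (a i)\<^sup>2) \<le> (\<Sum>i. (a i)\<^sup>2)" using a by (intro sum_le_suminf) (auto simp: l2_def)
  also have "(\<Sum>i. (a i)\<^sup>2) \<le> 1" using a(2) by (simp add: l2norm_def)
  finally show ?thesis .
qed

lemma l2ball_abs_coord_le_1: "a \<in> l2ball \<Longrightarrow> \<bar>a i\<bar> \<le> 1"
  using abs_l2_coord_le_l2norm[of a i] by (auto simp: l2ball_def)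

lemma l2ball_sum_abs_le_sqrt: assumes "a \<in> l2ball" shows "(\<Sum>i<n. \<bar>a i\<bar>) \<le> sqrt n"
proof -
  have "(\<Sum>i<n. \<bar>a i\<bar>)\<^sup>2 \<le> (\<Sum>i<n. \<bar>a i\<bar>\<^sup>2) * real n"
    using sum_squared_le_sum_of_squares[of "\<lambda>i. \<bar>a i\<bar>" "{..<n}"] by simp
  also have "\<dots> \<le> 1 * real n" using l2ball_sum_sq_le_1[OF assms, of n] by (intro mult_right_mono) auto
  finally have "(\<Sum>i<n. \<bar>a i\<bar>)\<^sup>2 \<le> real n" by simp
  then show ?thesis using real_le_rsqrt by blast
qed

lemma symmetric_convex_sum_mem:
  fixes n :: nat
  assumes F: "convex F" "0 \<in> F" "symmetric_set F" and v: "\<And>i. i < n \<Longrightarrow> v i \<in> F"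
    and w: "(\<Sum>i<n. \<bar>w i\<bar>) \<le> 1"
  shows "(\<Sum>i<n. w i *\<^sub>R v i) \<in> F"
proof -
  define y where "y = (\<lambda>i. if i < n then (if w i \<ge> 0 then v i else - v i) else 0)"
  define a where "a = (\<lambda>i. if i < n then \<bar>w i\<bar> else 1 - (\<Sum>i<n. \<bar>w i\<bar>))"
  have "(\<Sum>j\<in>{..<Suc n}. a j *\<^sub>R y j) \<in> F"
  proof (rule convex_sum[OF _ F(1)])
    show "sum a {..<Suc n} = 1" by (simp add: a_def)
    show "0 \<le> a i" if "i \<in> {..<Suc n}" for i using w by (auto simp: a_def)
    show "y i \<in> F" if "i \<in> {..<Suc n}" for i
      using v F(2,3) that by (auto simp: y_def symmetric_set_def)
  qed simp
  moreover have "(\<Sum>j\<in>{..<Suc n}. a j *\<^sub>R y j) = (\<Sum>i<n. w i *\<^sub>R v i)"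
    by (auto simp: a_def y_def intro!: sum.cong)
  ultimately show ?thesis by simp
qed

lemma convex_centered_sum_mem:
  assumes F: "convex F" and fg: "\<And>i. i < n \<Longrightarrow> f i \<in> F" "\<And>i. i < n \<Longrightarrow> g i \<in> F" and n: "n \<ge> 1"
    and a: "\<And>i. \<bar>a i\<bar> \<le> 1"
  shows "(\<Sum>i<n. ((1 / real n) * a i) *\<^sub>R ((1/2) *\<^sub>R (f i - g i))) + (\<Sum>i<n. (1 / real n) *\<^sub>R ((1/2) *\<^sub>R (f i + g i))) \<in> F"
proof -
  define y where "y = (\<lambda>i. ((1 + a i) / 2) *\<^sub>R f i + ((1 - a i) / 2) *\<^sub>R g i)"
  have yF: "y i \<in> F" if "i < n" for i
    unfolding y_def using a[of i] fg that by (intro convexD[OF F]) (auto simp: abs_le_iff field_simps)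
  have "(\<Sum>i\<in>{..<n}. (1 / real n) *\<^sub>R y i) \<in> F"
    by (rule convex_sum[OF _ F]) (use yF n in auto)
  moreover have "(\<Sum>i<n. ((1 / real n) * a i) *\<^sub>R ((1/2) *\<^sub>R (f i - g i))) + (\<Sum>i<n. (1 / real n) *\<^sub>R ((1/2) *\<^sub>R (f i + g i)))
      = (\<Sum>i\<in>{..<n}. (1 / real n) *\<^sub>R y i)"
    unfolding sum.distrib[symmetric] y_def
    by (intro sum.cong) (auto simp: add_divide_distrib diff_divide_distrib scaleR_left_distrib scaleR_left_diff_distrib algebra_simps)
  ultimately show ?thesis by simp
qed

lemma convex_half_diff_box:
  fixes n :: nat
  assumes F: "convex F" and n: "n \<ge> 1" and fg: "\<And>i. i < n \<Longrightarrow> f i \<in> F \<and> g i \<in> F"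
  shows "\<exists>x\<in>F. \<forall>a\<in>l2ball. (\<Sum>i<n. ((1 / real n) * a i) *\<^sub>R ((1/2) *\<^sub>R (f i - g i))) + x \<in> F"
proof (intro bexI ballI)
  show "(\<Sum>i<n. (1 / real n) *\<^sub>R ((1/2) *\<^sub>R (f i + g i))) \<in> F"
  proof (rule convex_sum[OF _ F])
    show "(1/2) *\<^sub>R (f i + g i) \<in> F" if "i \<in> {..<n}" for i
      using convexD[OF F, of "f i" "g i" "1/2" "1/2"] fg that by (simp add: scaleR_add_right)
  qed (use n in auto)
  fix a assume a: "a \<in> l2ball"
  show "(\<Sum>i<n. ((1 / real n) * a i) *\<^sub>R ((1/2) *\<^sub>R (f i - g i))) + (\<Sum>i<n. (1 / real n) *\<^sub>R ((1/2) *\<^sub>R (f i + g i))) \<in> F"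
    by (rule convex_centered_sum_mem[OF F _ _ n]) (use fg l2ball_abs_coord_le_1[OF a] in auto)
qed

lemma symmetric_half_diff_box:
  fixes n :: nat
  assumes F: "convex F" "symmetric_set F" and n: "n \<ge> 1" and fg: "\<And>i. i < n \<Longrightarrow> f i \<in> F \<and> g i \<in> F"
  shows "\<exists>x\<in>F. \<forall>a\<in>l2ball. (\<Sum>i<n. ((1 / sqrt n) * a i) *\<^sub>R ((1/2) *\<^sub>R (f i - g i))) + x \<in> F"
proof (intro bexI ballI)
  have f0: "f 0 \<in> F" using fg n by auto
  have "(1/2) *\<^sub>R f 0 + (1/2) *\<^sub>R (- f 0) \<in> F"
    using convexD[OF F(1), of "f 0" "- f 0" "1/2" "1/2"] f0 F(2) by (simp add: symmetric_set_def)
  then show z: "0 \<in> F" by (simp add: scaleR_right_diff_distrib[symmetric])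
  fix a assume a: "a \<in> l2ball"
  have v: "(1/2) *\<^sub>R (f i - g i) \<in> F" if "i < n" for i
  proof -
    have "(1/2) *\<^sub>R f i + (1/2) *\<^sub>R (- g i) \<in> F"
      using convexD[OF F(1), of "f i" "- g i" "1/2" "1/2"] fg[OF that] F(2) by (simp add: symmetric_set_def)
    then show ?thesis by (simp add: scaleR_diff_right)
  qed
  have w: "(\<Sum>i<n. \<bar>(1 / sqrt n) * a i\<bar>) \<le> 1"
  proof -
    have "(\<Sum>i<n. \<bar>(1 / sqrt n) * a i\<bar>) = (1 / sqrt n) * (\<Sum>i<n. \<bar>a i\<bar>)" by (simp add: abs_mult sum_distrib_left)
    also have "\<dots> \<le> (1 / sqrt n) * sqrt n" by (intro mult_left_mono l2ball_sum_abs_le_sqrt[OF a]) auto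
    also have "\<dots> = 1" using n by simp
    finally show ?thesis .
  qed
  show "(\<Sum>i<n. ((1 / sqrt n) * a i) *\<^sub>R ((1/2) *\<^sub>R (f i - g i))) + 0 \<in> F"
    using symmetric_convex_sum_mem[OF F(1) z F(2) v w] by simp
qed

lemma ball_orthogonal_half_diffs:
  fixes ip :: "'a::real_normed_vector \<Rightarrow> 'a \<Rightarrow> real" and n :: nat
  assumes ip: "inner_product_for ip" and fg: "\<And>i. i < n \<Longrightarrow> f i \<in> cball 0 1 \<and> g i \<in> cball 0 1"
    and orth: "\<And>j k. j < k \<Longrightarrow> k < n \<Longrightarrow> ip ((1/2) *\<^sub>R (f k - g k)) ((1/2) *\<^sub>R (f j - g j)) = 0"
  shows "\<exists>x\<in>cball (0::'a) 1. \<forall>a\<in>l2ball. (\<Sum>i<n. (1 * a i) *\<^sub>R ((1/2) *\<^sub>R (f i - g i))) + x \<in> cball 0 1"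
proof (intro bexI ballI)
  fix a assume a: "a \<in> l2ball"
  define u where "u = (\<lambda>i. (1/2) *\<^sub>R (f i - g i))"
  have un: "norm (u i) \<le> 1" if "i < n" for i
  proof -
    have "norm (u i) \<le> (1/2) * (norm (f i) + norm (g i))" unfolding u_def using norm_triangle_ineq4[of "f i" "g i"] by simp
    also have "\<dots> \<le> 1" using fg[OF that] by simp
    finally show ?thesis .
  qed
  have "(norm (\<Sum>i\<in>{..<n}. a i *\<^sub>R u i))\<^sup>2 = (\<Sum>i\<in>{..<n}. (a i)\<^sup>2 * (norm (u i))\<^sup>2)"
  proof (rule norm_sum_orthogonal_sq[OF ip])
    show "ip (u i) (u j) = 0" if "i \<in> {..<n}" "j \<in> {..<n}" "i \<noteq> j" for i j
    proof (cases "j < i")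
      case True then show ?thesis using orth[of j i] that by (simp add: u_def)
    next
      case False then have "i < j" using that by linarith
      then show ?thesis using orth[of i j] that ip_sym[OF ip] by (simp add: u_def)
    qed
  qed simp
  also have "\<dots> \<le> (\<Sum>i<n. (a i)\<^sup>2 * 1)"
    using un by (intro sum_mono mult_left_mono) (auto simp: power_le_one)
  also have "\<dots> \<le> 1" using l2ball_sum_sq_le_1[OF a] by simp
  finally have "norm (\<Sum>i<n. a i *\<^sub>R u i) \<le> 1" by (simp add: power_le_one_iff)
  then show "(\<Sum>i<n. (1 * a i) *\<^sub>R ((1/2) *\<^sub>R (f i - g i))) + 0 \<in> cball 0 1" by (simp add: u_def)
qed simp

lemma gelfand_number_Suc_le:
  fixes S :: "'a::real_normed_vector \<Rightarrow> 'b::real_normed_vector"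
  shows "gelfand_number S F (Suc k) \<le> gelfand_number S F k"
  unfolding gelfand_number_def gelfand_gen_def mem_Collect_eq
proof (rule INF_greatest)
  fix L :: "nat \<Rightarrow> 'a \<Rightarrow> real" assume "L \<in> {L. \<forall>j<k. bounded_linear (L j)}"
  then have L': "L(k := (\<lambda>_. 0)) \<in> {L. \<forall>j<Suc k. bounded_linear (L j)}"
    by (auto simp: less_Suc_eq bounded_linear_zero)
  show "(INF L\<in>{L :: nat \<Rightarrow> 'a \<Rightarrow> real. \<forall>j<Suc k. bounded_linear (L j)}.
          SUP p\<in>{(f, g). f \<in> F \<and> g \<in> F \<and> (\<forall>j<Suc k. L j f = L j g)}. ennreal (dist (S (fst p)) (S (snd p)) / 2))
        \<le> (SUP p\<in>{(f, g). f \<in> F \<and> g \<in> F \<and> (\<forall>j<k. L j f = L j g)}. ennreal (dist (S (fst p)) (S (snd p)) / 2))"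
    by (rule INF_lower2[OF L']) (simp add: less_Suc_eq)
qed

lemma gelfand_number_antimono:
  fixes S :: "'a::real_normed_vector \<Rightarrow> 'b::real_normed_vector"
  shows "k \<le> k' \<Longrightarrow> gelfand_number S F k' \<le> gelfand_number S F k"
  by (induction k' rule: dec_induct) (auto intro: order_trans[OF gelfand_number_Suc_le])

lemma prod_le_prod_hilbert_number_from_pairs:
  fixes S :: "'a::real_normed_vector \<Rightarrow> 'b::real_normed_vector" and F :: "'a set"
    and N :: "'b \<Rightarrow> 'b \<Rightarrow> real" and E :: "'a \<Rightarrow> 'a \<Rightarrow> real"
  assumes S: "bounded_linear S" and N: "\<And>y. bounded_linear (N y)" and Nyy: "\<And>y. N y y = norm y"
    and E: "\<And>v. bounded_linear (E v)" and mk: "\<And>k. k \<le> m k"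
    and t: "\<And>k. k < n \<Longrightarrow> 0 < t k \<and> ennreal (t k) < gelfand_number S F (m k)"
    and ab: "\<alpha> \<ge> 0" "\<beta> \<ge> 0"
    and Bnhyp: "\<And>u y. (\<And>j i. j < i \<Longrightarrow> i < n \<Longrightarrow> N (S (u j)) (S (u i)) = 0) \<Longrightarrow> (\<And>k. k < n \<Longrightarrow> norm (S (u k)) > 0)
        \<Longrightarrow> (\<Sum>j<n. (\<beta> * N (S (u j)) y)\<^sup>2) \<le> (norm y)\<^sup>2"
    and AFhyp: "\<And>f g. (\<And>i. i < n \<Longrightarrow> f i \<in> F \<and> g i \<in> F) \<Longrightarrow>
        (\<And>j k. j < k \<Longrightarrow> k < n \<Longrightarrow> 2 * k \<le> m k \<Longrightarrow> E ((1/2) *\<^sub>R (f j - g j)) ((1/2) *\<^sub>R (f k - g k)) = 0) \<Longrightarrow>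
        \<exists>x\<in>F. \<forall>a\<in>l2ball. (\<Sum>i<n. (\<alpha> * a i) *\<^sub>R ((1/2) *\<^sub>R (f i - g i))) + x \<in> F"
  shows "ennreal (\<Prod>k<n. \<alpha> * \<beta> * t k) \<le> (\<Prod>k<n. hilbert_number S F k)"
proof -
  define f where "f = (\<lambda>k. fst (chosen_pair F S m t N E k))"
  define g where "g = (\<lambda>k. snd (chosen_pair F S m t N E k))"
  define u where "u = chosen_half_diff F S m t N E"
  have C: "f k \<in> F" "g k \<in> F" "u k = (1/2) *\<^sub>R (f k - g k)" "t k < norm (S (u k))"
    "\<And>j. j < k \<Longrightarrow> N (S (u j)) (S (u k)) = 0"
    "\<And>j. j < k \<Longrightarrow> 2 * k \<le> m k \<Longrightarrow> E (u j) (u k) = 0" if k: "k < n" for k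
    using chosen_pair_props[where t=t and k=k and F=F and m=m and N=N and E=E and S=S, OF S N E _ _ mk[of k]] t[OF k] unfolding f_def g_def u_def
    by (auto simp: less_imp_le)
  have "\<exists>x\<in>F. \<forall>a\<in>l2ball. (\<Sum>i<n. (\<alpha> * a i) *\<^sub>R ((1/2) *\<^sub>R (f i - g i))) + x \<in> F"
  proof (rule AFhyp)
    show "f i \<in> F \<and> g i \<in> F" if "i < n" for i using C[OF that] by simp
    show "E ((1/2) *\<^sub>R (f j - g j)) ((1/2) *\<^sub>R (f k - g k)) = 0" if "j < k" "k < n" "2 * k \<le> m k" for j k
      using C(6)[OF that(2) that(1) that(3)] C(3)[OF that(2)] C(3)[of j] that by simp
  qed
  then obtain x where x: "x \<in> F" and AF: "\<And>a. a \<in> l2ball \<Longrightarrow> (\<Sum>i<n. (\<alpha> * a i) *\<^sub>R ((1/2) *\<^sub>R (f i - g i))) + x \<in> F"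
    by blast
  show ?thesis
  proof (rule prod_diag_le_prod_hilbert_number[where u=u and \<psi>="\<lambda>j. N (S (u j))" and x=x, OF S])
    show "linear (N (S (u j)))" for j using N bounded_linear.linear by blast
    show "(\<Sum>j<n. (\<beta> * N (S (u j)) y)\<^sup>2) \<le> (norm y)\<^sup>2" for y
    proof (rule Bnhyp)
      show "N (S (u j)) (S (u i)) = 0" if "j < i" "i < n" for j i using C(5)[OF that(2) that(1)] .
      show "norm (S (u k)) > 0" if "k < n" for k using C(4)[OF that] t[OF that] by linarith
    qed
    show "N (S (u j)) (S (u i)) = 0" if "j < i" "i < n" for j i using C(5)[OF that(2) that(1)] .
    show "t k \<le> N (S (u k)) (S (u k))" if "k < n" for k using C(4)[OF that] Nyy by simp
    show "0 \<le> t k" if "k < n" for k using t[OF that] by simp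
    show "\<alpha> \<ge> 0" "\<beta> \<ge> 0" by (rule ab)+
    show "x \<in> F" by (rule x)
    show "(\<Sum>i<n. (\<alpha> * a i) *\<^sub>R u i) + x \<in> F" if "a \<in> l2ball" for a
    proof -
      have "(\<Sum>i<n. (\<alpha> * a i) *\<^sub>R u i) = (\<Sum>i<n. (\<alpha> * a i) *\<^sub>R ((1/2) *\<^sub>R (f i - g i)))"
        using C(3) by (intro sum.cong) auto
      then show ?thesis using AF[OF that] by simp
    qed
  qed
qed

lemma enn_root_prod_gelfand_le_hilbert:
  fixes S :: "'a::real_normed_vector \<Rightarrow> 'b::real_normed_vector" and F :: "'a set"
    and N :: "'b \<Rightarrow> 'b \<Rightarrow> real" and E :: "'a \<Rightarrow> 'a \<Rightarrow> real"
  assumes S: "bounded_linear S" and N: "\<And>y. bounded_linear (N y)" and Nyy: "\<And>y. N y y = norm y"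
    and E: "\<And>v. bounded_linear (E v)" and mk: "\<And>k. k \<le> m k"
    and ab: "\<alpha> > 0" "\<beta> > 0" and n: "n \<ge> 1"
    and Bnhyp: "\<And>u y. (\<And>j i. j < i \<Longrightarrow> i < n \<Longrightarrow> N (S (u j)) (S (u i)) = 0) \<Longrightarrow> (\<And>k. k < n \<Longrightarrow> norm (S (u k)) > 0)
        \<Longrightarrow> (\<Sum>j<n. (\<beta> * N (S (u j)) y)\<^sup>2) \<le> (norm y)\<^sup>2"
    and AFhyp: "\<And>f g. (\<And>i. i < n \<Longrightarrow> f i \<in> F \<and> g i \<in> F) \<Longrightarrow>
        (\<And>j k. j < k \<Longrightarrow> k < n \<Longrightarrow> 2 * k \<le> m k \<Longrightarrow> E ((1/2) *\<^sub>R (f j - g j)) ((1/2) *\<^sub>R (f k - g k)) = 0) \<Longrightarrow>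
        \<exists>x\<in>F. \<forall>a\<in>l2ball. (\<Sum>i<n. (\<alpha> * a i) *\<^sub>R ((1/2) *\<^sub>R (f i - g i))) + x \<in> F"
  shows "enn_root n (\<Prod>k<n. gelfand_number S F (m k))
           \<le> ennreal (1 / (\<alpha> * \<beta>)) * enn_root n (\<Prod>k<n. hilbert_number S F k)"
proof (rule enn_root_prod_le_by_approx[OF _ _ n])
  fix t assume t: "\<And>k. k < n \<Longrightarrow> 0 < t k \<and> ennreal (t k) < gelfand_number S F (m k)"
  show "ennreal (\<Prod>k<n. \<alpha> * \<beta> * t k) \<le> (\<Prod>k<n. hilbert_number S F k)"
    by (rule prod_le_prod_hilbert_number_from_pairs[OF S N Nyy E mk t
          less_imp_le[OF ab(1)] less_imp_le[OF ab(2)] Bnhyp AFhyp])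
qed (use ab in simp)

lemma powr_three_halves:
  assumes "0 < x" shows "x powr (3/2) = x * sqrt x"
proof -
  have "x powr (3/2) = x powr 1 * x powr (1/2)" by (subst powr_add[symmetric]) simp
  then show ?thesis using assms by (simp add: powr_half_sqrt)
qed

lemma enn_root_prod_gelfand_le_hilbert_convex:
  fixes S :: "'a::real_normed_vector \<Rightarrow> 'b::real_normed_vector"
  assumes S: "bounded_linear S" and F: "convex F" and n: "n \<ge> 1"
  shows "enn_root n (\<Prod>k<n. gelfand_number S F k) \<le> ennreal (real n powr (3/2)) * enn_root n (\<Prod>k<n. hilbert_number S F k)"
proof -
  have "enn_root n (\<Prod>k<n. gelfand_number S F k) \<le> ennreal (1 / (1 / real n * (1 / sqrt n))) * enn_root n (\<Prod>k<n. hilbert_number S F k)"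
  proof (rule enn_root_prod_gelfand_le_hilbert[where N=norming_fun and E="\<lambda>_ _. 0" and m="\<lambda>k. k",
        OF S bounded_linear_norming_fun norming_fun_self bounded_linear_zero])
    show "(\<Sum>j<n. ((1 / sqrt n) * norming_fun (S (u j)) y)\<^sup>2) \<le> (norm y)\<^sup>2" for u y
      by (rule sum_sq_norming_fun_le[OF n])
    show "\<exists>x\<in>F. \<forall>a\<in>l2ball. (\<Sum>i<n. ((1 / real n) * a i) *\<^sub>R ((1/2) *\<^sub>R (f i - g i))) + x \<in> F"
      if "\<And>i. i < n \<Longrightarrow> f i \<in> F \<and> g i \<in> F" for f g
      by (rule convex_half_diff_box[OF F n that])
  qed (use n in auto)
  then show ?thesis using n by (simp add: powr_three_halves)
qed

lemma enn_root_prod_gelfand_le_hilbert_symmetric: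
  fixes S :: "'a::real_normed_vector \<Rightarrow> 'b::real_normed_vector"
  assumes S: "bounded_linear S" and F: "convex F" "symmetric_set F" and n: "n \<ge> 1"
  shows "enn_root n (\<Prod>k<n. gelfand_number S F k) \<le> ennreal (real n) * enn_root n (\<Prod>k<n. hilbert_number S F k)"
proof -
  have "enn_root n (\<Prod>k<n. gelfand_number S F k) \<le> ennreal (1 / (1 / sqrt n * (1 / sqrt n))) * enn_root n (\<Prod>k<n. hilbert_number S F k)"
  proof (rule enn_root_prod_gelfand_le_hilbert[where N=norming_fun and E="\<lambda>_ _. 0" and m="\<lambda>k. k",
        OF S bounded_linear_norming_fun norming_fun_self bounded_linear_zero])
    show "(\<Sum>j<n. ((1 / sqrt n) * norming_fun (S (u j)) y)\<^sup>2) \<le> (norm y)\<^sup>2" for u y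
      by (rule sum_sq_norming_fun_le[OF n])
    show "\<exists>x\<in>F. \<forall>a\<in>l2ball. (\<Sum>i<n. ((1 / sqrt n) * a i) *\<^sub>R ((1/2) *\<^sub>R (f i - g i))) + x \<in> F"
      if "\<And>i. i < n \<Longrightarrow> f i \<in> F \<and> g i \<in> F" for f g
      by (rule symmetric_half_diff_box[OF F n that])
  qed (use n in auto)
  then show ?thesis using n by simp
qed

lemma enn_root_prod_gelfand_le_hilbert_hilbert_target:
  fixes S :: "'a::real_normed_vector \<Rightarrow> 'b::real_normed_vector"
  assumes S: "bounded_linear S" and F: "convex F" and n: "n \<ge> 1" and H: "hilbert_space TYPE('b)"
  shows "enn_root n (\<Prod>k<n. gelfand_number S F k) \<le> ennreal (real n) * enn_root n (\<Prod>k<n. hilbert_number S F k)"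
proof -
  obtain ip :: "'b \<Rightarrow> 'b \<Rightarrow> real" where ip: "inner_product_for ip"
    using hilbert_space_inner_product[OF H] by blast
  have "enn_root n (\<Prod>k<n. gelfand_number S F k) \<le> ennreal (1 / (1 / real n * 1)) * enn_root n (\<Prod>k<n. hilbert_number S F k)"
  proof (rule enn_root_prod_gelfand_le_hilbert[where N="normalized_inner ip" and E="\<lambda>_ _. 0" and m="\<lambda>k. k",
        OF S bounded_linear_normalized_inner[OF ip] normalized_inner_self[OF ip] bounded_linear_zero])
    show "(\<Sum>j<n. (1 * normalized_inner ip (S (u j)) y)\<^sup>2) \<le> (norm y)\<^sup>2"
      if "\<And>j i. j < i \<Longrightarrow> i < n \<Longrightarrow> normalized_inner ip (S (u j)) (S (u i)) = 0"
        "\<And>k. k < n \<Longrightarrow> norm (S (u k)) > 0" for u y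
      by (rule sum_sq_normalized_inner_le[OF ip that])
    show "\<exists>x\<in>F. \<forall>a\<in>l2ball. (\<Sum>i<n. ((1 / real n) * a i) *\<^sub>R ((1/2) *\<^sub>R (f i - g i))) + x \<in> F"
      if "\<And>i. i < n \<Longrightarrow> f i \<in> F \<and> g i \<in> F" for f g
      by (rule convex_half_diff_box[OF F n that])
  qed (use n in auto)
  then show ?thesis using n by simp
qed

lemma enn_root_prod_gelfand_le_hilbert_symmetric_hilbert_target:
  fixes S :: "'a::real_normed_vector \<Rightarrow> 'b::real_normed_vector"
  assumes S: "bounded_linear S" and F: "convex F" "symmetric_set F" and n: "n \<ge> 1"
    and H: "hilbert_space TYPE('b)"
  shows "enn_root n (\<Prod>k<n. gelfand_number S F k) \<le> ennreal (real n powr (1/2)) * enn_root n (\<Prod>k<n. hilbert_number S F k)"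
proof -
  obtain ip :: "'b \<Rightarrow> 'b \<Rightarrow> real" where ip: "inner_product_for ip"
    using hilbert_space_inner_product[OF H] by blast
  have "enn_root n (\<Prod>k<n. gelfand_number S F k) \<le> ennreal (1 / (1 / sqrt n * 1)) * enn_root n (\<Prod>k<n. hilbert_number S F k)"
  proof (rule enn_root_prod_gelfand_le_hilbert[where N="normalized_inner ip" and E="\<lambda>_ _. 0" and m="\<lambda>k. k",
        OF S bounded_linear_normalized_inner[OF ip] normalized_inner_self[OF ip] bounded_linear_zero])
    show "(\<Sum>j<n. (1 * normalized_inner ip (S (u j)) y)\<^sup>2) \<le> (norm y)\<^sup>2"
      if "\<And>j i. j < i \<Longrightarrow> i < n \<Longrightarrow> normalized_inner ip (S (u j)) (S (u i)) = 0"
        "\<And>k. k < n \<Longrightarrow> norm (S (u k)) > 0" for u y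
      by (rule sum_sq_normalized_inner_le[OF ip that])
    show "\<exists>x\<in>F. \<forall>a\<in>l2ball. (\<Sum>i<n. ((1 / sqrt n) * a i) *\<^sub>R ((1/2) *\<^sub>R (f i - g i))) + x \<in> F"
      if "\<And>i. i < n \<Longrightarrow> f i \<in> F \<and> g i \<in> F" for f g
      by (rule symmetric_half_diff_box[OF F n that])
  qed (use n in auto)
  then show ?thesis using n by (simp add: powr_half_sqrt)
qed

lemma enn_root_prod_gelfand_le_hilbert_hilbert_ball:
  fixes S :: "'a::real_normed_vector \<Rightarrow> 'b::real_normed_vector"
  assumes S: "bounded_linear S" and n: "n \<ge> 1" and H: "hilbert_space TYPE('a)"
  shows "enn_root n (\<Prod>k<n. gelfand_number S (cball 0 1) (2 * k))
           \<le> ennreal (real n powr (1/2)) * enn_root n (\<Prod>k<n. hilbert_number S (cball 0 1) k)"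
proof -
  obtain ip :: "'a \<Rightarrow> 'a \<Rightarrow> real" where ip: "inner_product_for ip"
    using hilbert_space_inner_product[OF H] by blast
  have "enn_root n (\<Prod>k<n. gelfand_number S (cball 0 1) (2 * k))
          \<le> ennreal (1 / (1 * (1 / sqrt n))) * enn_root n (\<Prod>k<n. hilbert_number S (cball 0 1) k)"
  proof (rule enn_root_prod_gelfand_le_hilbert[where N=norming_fun and E="\<lambda>v x. ip x v" and m="\<lambda>k. 2 * k",
        OF S bounded_linear_norming_fun norming_fun_self ip_bounded_linear[OF ip]])
    show "(\<Sum>j<n. ((1 / sqrt n) * norming_fun (S (u j)) y)\<^sup>2) \<le> (norm y)\<^sup>2" for u y
      by (rule sum_sq_norming_fun_le[OF n])
    show "\<exists>x\<in>cball 0 1. \<forall>a\<in>l2ball. (\<Sum>i<n. (1 * a i) *\<^sub>R ((1/2) *\<^sub>R (f i - g i))) + x \<in> cball 0 1"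
      if "\<And>i. i < n \<Longrightarrow> f i \<in> cball 0 1 \<and> g i \<in> cball 0 1"
        "\<And>j k. j < k \<Longrightarrow> k < n \<Longrightarrow> 2 * k \<le> 2 * k \<Longrightarrow> ip ((1/2) *\<^sub>R (f k - g k)) ((1/2) *\<^sub>R (f j - g j)) = 0"
      for f g
      by (rule ball_orthogonal_half_diffs[OF ip that(1)]) (use that(2) in auto)
  qed (use n in auto)
  then show ?thesis using n by (simp add: powr_half_sqrt)
qed

theorem theorem3p2:
  fixes S :: "'a::banach \<Rightarrow> 'b::banach" and F :: "'a set" and n :: nat
  assumes "bounded_linear S" and "convex F" and "n \<ge> 1"
  shows "gelfand_number S F (n - 1)
           \<le> enn_root n (\<Prod>k<n. gelfand_number S F k)
    \<and> enn_root n (\<Prod>k<n. gelfand_number S F k)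
           \<le> ennreal (real n powr (3/2)) * enn_root n (\<Prod>k<n. hilbert_number S F k)
    \<and> (symmetric_set F \<longrightarrow>
         enn_root n (\<Prod>k<n. gelfand_number S F k)
           \<le> ennreal (real n powr 1) * enn_root n (\<Prod>k<n. hilbert_number S F k))
    \<and> (hilbert_space TYPE('b) \<longrightarrow>
         enn_root n (\<Prod>k<n. gelfand_number S F k)
           \<le> ennreal (real n powr 1) * enn_root n (\<Prod>k<n. hilbert_number S F k))
    \<and> (symmetric_set F \<and> hilbert_space TYPE('b) \<longrightarrow>
         enn_root n (\<Prod>k<n. gelfand_number S F k)
           \<le> ennreal (real n powr (1/2)) * enn_root n (\<Prod>k<n. hilbert_number S F k))
    \<and> (hilbert_space TYPE('a) \<and> F = cball 0 1 \<longrightarrow>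
         gelfand_number S F (2 * n - 2)
           \<le> enn_root n (\<Prod>k<n. gelfand_number S F (2 * k)) \<and>
         enn_root n (\<Prod>k<n. gelfand_number S F (2 * k))
           \<le> ennreal (real n powr (1/2)) * enn_root n (\<Prod>k<n. hilbert_number S F k))"
proof -
  have "gelfand_number S F (n - 1) \<le> enn_root n (\<Prod>k<n. gelfand_number S F k)"
    and "gelfand_number S F (2 * n - 2) \<le> enn_root n (\<Prod>k<n. gelfand_number S F (2 * k))"
    using assms by (intro le_enn_root_prod gelfand_number_antimono; simp)+
  then show ?thesis
    using assms by (auto intro: enn_root_prod_gelfand_le_hilbert_convex
        enn_root_prod_gelfand_le_hilbert_symmetric enn_root_prod_gelfand_le_hilbert_hilbert_target
        enn_root_prod_gelfand_le_hilbert_symmetric_hilbert_target enn_root_prod_gelfand_le_hilbert_hilbert_ball)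
qed

end
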